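(* Let $d\ge 1$ be an integer and $\vec\gamma=(\gamma_1,\dots,\gamma_d)\in\mathbb{C}^d$. Let $g\colon\mathbb{C}\to\mathbb{C}$ be holomorphic with a simple zero $\alpha\neq 0$, with expansion $g(z)=\sum_{k\ge 1}c_k(z-\alpha)^k$ about $\alpha$, where $c_1\neq 0$; fix a point of $L$ lying over $\alpha$, also denoted $\alpha$. For $\vec a=(a_1,\dots,a_d)\in\mathbb{C}^d$ let $f(z;\vec a)=g(z)+\sum_{i=1}^d a_i z^{\gamma_i}$ for $z\in L$ (with $g(z)$ meaning $g(z^1)$ near $\alpha$). Suppose that for some neighborhood $U\subset\mathbb{C}^d$ of $\vec 0$ there is a smooth map $\phi\colon U\to L$ with $f(\phi(\vec a);\vec a)=0$ for all $\vec a\in U$ and $\phi(\vec 0)=\alpha$. Then for every ordered multiset $I=(I(1),\dots,I(N))$ of $[1,d]$ with $N=|I|\ge 1$, \[ \partial(\phi,I)=F\Big(\sum_{m\in I}\gamma_m,\ |I|-1,\ 1\Big), \] where $\partial(\phi,I)=\Big(\prod_{i=1}^{N}\frac{\partial}{\partial a_{I(i)}}\Big)\phi(\vec a)\big|_{\vec a=\vec 0}$ and $F$ is the function defined in the context.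
   Context: $L$ is the Riemann surface of the logarithm, parametrized by triples $(r,\theta,n)$ with $r>0$, $\theta\in(-\pi,\pi]$, $n\in\mathbb{Z}$; for $z=(r,\theta,n)\in L$ and $\gamma\in\mathbb{C}$, $z^\gamma=e^{\gamma\ln r+i\gamma\theta+2\pi i n\gamma}$. Derivatives of $\phi$ are taken in the local complex coordinate $z\mapsto z^1$ near $\alpha$. An ordered multiset of $[1,d]$ of order $N$ is an $N$-tuple $(I(1),\dots,I(N))$ with $1\le I(i)\le d$, and $\sum_{m\in I}\gamma_m=\sum_{i=1}^N\gamma_{I(i)}$. For an integer $r\ge 0$, $C(r)$ is the set of sequences $\mu=(\mu_i)_{i\ge 1}$ of nonnegative integers, eventually zero, with $\sum_{i\ge1}\mu_i=r$. For $x\in\mathbb{C}$ and integer $n$, $\binom{x}{n}=\frac{x(x-1)\cdots(x-n+1)}{n!}$ for $n\ge 0$ and $\binom{x}{n}=0$ for $n<0$. For $x\in\mathbb{C}$ and integers $r\ge 0$, $a\ge 1$, define \[ F(x,r,a)=\frac{-\alpha^{x}}{(a-1)!}\sum_{\mu\in C(r)}(-1)^{\mu_1}\binom{x}{\,r-\sum_{i\ge2}(i-1)\mu_i-(a-1)\,}\Big(r+\sum_{i\ge2}\mu_i\Big)!\,\frac{\alpha^{-(r-\sum_{i\ge2}(i-1)\mu_i-(a-1))}}{c_1^{\,r+1+\sum_{i\ge2}\mu_i}}\prod_{i\ge2}\frac{c_i^{\mu_i}}{\mu_i!}, \] where powers of $\alpha$ are taken in the sense of $L$. *)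

theory Defs
  imports "HOL-Analysis.Analysis"
begin

text \<open>Points of the Riemann surface L of the logarithm: triples (r, theta, n)
  with r > 0, -pi < theta \<le> pi, n an integer.\<close>
type_synonym Lpt = "real \<times> real \<times> int"

definition in_L :: "Lpt \<Rightarrow> bool" where
  "in_L z \<longleftrightarrow> (case z of (r, \<theta>, n) \<Rightarrow> r > 0 \<and> - pi < \<theta> \<and> \<theta> \<le> pi)"

definition Lpow :: "Lpt \<Rightarrow> complex \<Rightarrow> complex" where
  "Lpow z \<gamma> = (case z of (r, \<theta>, n) \<Rightarrow>
      exp (\<gamma> * of_real (ln r) + \<i> * \<gamma> * of_real \<theta> + 2 * of_real pi * \<i> * of_int n * \<gamma>))"

text \<open>Global (logarithmic) coordinate on L, a homeomorphism L \<rightarrow> C and a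
  holomorphic chart compatible with the local charts z \<mapsto> z^1.\<close>
definition Llog :: "Lpt \<Rightarrow> complex" where
  "Llog z = (case z of (r, \<theta>, n) \<Rightarrow>
      of_real (ln r) + \<i> * (of_real \<theta> + 2 * of_real pi * of_int n))"

definition pdiff :: "'d::finite \<Rightarrow> (complex^'d \<Rightarrow> complex) \<Rightarrow> complex^'d \<Rightarrow> complex" where
  "pdiff i h a = deriv (\<lambda>t. h (a + axis i t)) 0"

fun iter_pdiff :: "'d::finite list \<Rightarrow> (complex^'d \<Rightarrow> complex) \<Rightarrow> complex^'d \<Rightarrow> complex" where
  "iter_pdiff [] h = h"
| "iter_pdiff (i # is) h = pdiff i (iter_pdiff is h)"

definition gbinom :: "complex \<Rightarrow> int \<Rightarrow> complex" where
  "gbinom x n = (if n < 0 then 0 else x gchoose (nat n))"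

text \<open>C(r): sequences (mu_i)_{i \<ge> 1} of nonnegative integers, eventually zero,
  summing to r. Represented as nat \<Rightarrow> nat with the unused entry mu 0 = 0.\<close>
definition Cseq :: "nat \<Rightarrow> (nat \<Rightarrow> nat) set" where
  "Cseq r = {\<mu>. \<mu> 0 = 0 \<and> finite {i. \<mu> i \<noteq> 0} \<and> (\<Sum>i\<in>{i. \<mu> i \<noteq> 0}. \<mu> i) = r}"

definition supp2 :: "(nat \<Rightarrow> nat) \<Rightarrow> nat set" where
  "supp2 \<mu> = {i. 2 \<le> i \<and> \<mu> i \<noteq> 0}"

text \<open>The function F(x, r, a); alpha is the chosen point of L, c the Taylor coefficients.\<close>
definition Ffun :: "Lpt \<Rightarrow> (nat \<Rightarrow> complex) \<Rightarrow> complex \<Rightarrow> nat \<Rightarrow> nat \<Rightarrow> complex" where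
  "Ffun \<alpha> c x r a =
     - Lpow \<alpha> x / of_nat (fact (a - 1)) *
     (\<Sum>\<^sub>\<infinity>\<mu>\<in>Cseq r.
        (let s1 = (\<Sum>i\<in>supp2 \<mu>. (i - 1) * \<mu> i);
             s2 = (\<Sum>i\<in>supp2 \<mu>. \<mu> i);
             k = int r - int s1 - (int a - 1)
         in (-1) ^ (\<mu> 1) * gbinom x k * of_nat (fact (r + s2)) *
            Lpow \<alpha> (- of_int k) / c 1 ^ (r + 1 + s2) *
            (\<Prod>i\<in>supp2 \<mu>. c i ^ \<mu> i / of_nat (fact (\<mu> i)))))"

end

theory Submission
  imports Defs "HOL-Complex_Analysis.Complex_Analysis" "HOL-Combinatorics.Multiset_Permutations"
begin

text \<open>Write \<open>z = \<alpha> + w\<close> and \<open>G(w) = g(\<alpha> + w) / w\<close>, so that \<open>G(0) = c\<^sub>1 \<noteq> 0\<close>. Near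
  \<open>a = 0\<close> the equation \<open>f(\<phi>(a); a) = 0\<close> becomes the fixed-point equation
  \<open>w = \<Sum>i. a\<^sub>i \<Phi>\<^sub>i(w)\<close> with \<open>\<Phi>\<^sub>i(w) = -(\<alpha> + w)\<^bsup>\<gamma>\<^sub>i\<^esup> / G(w)\<close>, the power taken on the
  branch through the chosen point of \<open>L\<close>. Lagrange inversion in several variables gives
  \<open>\<partial>(\<phi>, I) = (d/dw)\<^bsup>N-1\<^esup> \<Prod>i\<in>I. \<Phi>\<^sub>i(w)\<close> at \<open>w = 0\<close>, i.e. \<open>(-1)\<^sup>N (N-1)!\<close> times the
  coefficient of \<open>w\<^bsup>N-1\<^esup>\<close> in \<open>(\<alpha> + w)\<^sup>x G(w)\<^bsup>-N\<^esup>\<close>, \<open>x = \<Sum>m\<in>I. \<gamma>\<^sub>m\<close>. Expanding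
  \<open>(1 + w/\<alpha>)\<^sup>x\<close> binomially and \<open>G\<^bsup>-N\<^esup> = c\<^sub>1\<^bsup>-N\<^esup> (1 + E)\<^bsup>-N\<^esup>\<close> by the multinomial theorem
  gives a sum over partitions, which is \<open>F(x, N - 1, 1)\<close> once a partition is encoded by its
  multiplicity sequence \<open>\<mu>\<close>.

  Lagrange inversion is proved by induction on \<open>|I|\<close>: \<open>\<partial>\<^sub>I u(a) = D\<^bsup>|I|-1\<^esup>(\<Prod>\<Phi> / J\<^sub>a)(u(a))\<close>
  where \<open>J\<^sub>a = 1 - \<Sum>i. a\<^sub>i \<Phi>\<^sub>i'\<close> and \<open>D X = X' / J\<^sub>a\<close>. Differentiating in \<open>a\<^sub>j\<close> replaces
  \<open>J\<^sub>a\<close> by \<open>J\<^sub>a - s \<Phi>\<^sub>j'\<close>, and the numerators of \<open>D\<^sup>m(K / (J\<^sub>a - s \<Phi>\<^sub>j'))\<close> are polynomials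
  in \<open>s\<close>, which makes the derivative in \<open>s\<close> computable.\<close>

lemma open_nonzero_set:
  fixes f :: "'a::topological_space \<Rightarrow> 'b::{t1_space,zero}"
  assumes "open B" "continuous_on B f"
  shows "open {v\<in>B. f v \<noteq> 0}"
proof -
  have "open (B \<inter> f -` (-{0}))"
    by (rule continuous_open_preimage[OF assms(2,1)]) (simp add: open_Compl)
  then show ?thesis
    by (simp add: vimage_def Int_def)
qed

lemma eventually_nhds_isCont_in_open:
  assumes "isCont f x" "open S" "f x \<in> S"
  shows "eventually (\<lambda>y. f y \<in> S) (nhds x)"
  using assms by (metis eventually_nhds_conv_at isCont_def topological_tendstoD)

lemma has_field_derivative_divide_power:
  assumes "(f has_field_derivative D) (at v)" "(q has_field_derivative Dq) (at v)" "q v \<noteq> 0"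
  shows "((\<lambda>v. f v / q v ^ n) has_field_derivative
           D / q v ^ n - of_nat n * f v * Dq / q v ^ (n + 1)) (at v)"
proof -
  have "((\<lambda>v. f v / q v ^ n) has_field_derivative
     (D * q v ^ n - f v * (of_nat n * Dq * q v ^ (n - 1))) / (q v ^ n * q v ^ n)) (at v)"
    using DERIV_divide[OF assms(1) DERIV_power[OF assms(2), of n]] assms(3) by (simp add: mult.assoc)
  moreover have "(D * q v ^ n - f v * (of_nat n * Dq * q v ^ (n - 1))) / (q v ^ n * q v ^ n)
      = D / q v ^ n - of_nat n * f v * Dq / q v ^ (n + 1)"
    using assms(3) by (cases n) (simp_all add: field_simps)
  ultimately show ?thesis
    by simp
qed

lemma deriv_add_const: "deriv (\<lambda>x. f x + c) x = deriv f x"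
proof -
  have "((\<lambda>x. f x + c) has_field_derivative D) (at x) \<longleftrightarrow> (f has_field_derivative D) (at x)" for D
    using DERIV_add[OF _ DERIV_const[of "-c"], of "\<lambda>x. f x + c"] DERIV_add[OF _ DERIV_const[of c], of f]
    by auto
  then show ?thesis
    by (simp add: deriv_def)
qed

lemma axis_zero [simp]: "axis j 0 = 0"
  by simp

lemma eventually_add_axis_in_open:
  fixes a :: "complex^'d::finite"
  assumes "open V" "a \<in> V"
  shows "eventually (\<lambda>s. a + axis j s \<in> V) (nhds 0)"
proof (rule eventually_nhds_isCont_in_open[OF _ assms(1)])
  have "((\<lambda>s. if i = j then s else 0) \<longlongrightarrow> (if i = j then 0 else 0)) (at (0::complex))" for i
    by (cases "i = j") (auto intro: tendsto_ident_at)
  then have "(axis j \<longlongrightarrow> axis j 0) (at (0::complex))"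
    unfolding axis_def[abs_def] by (intro tendsto_vec_lambda)
  then show "isCont (\<lambda>s. a + axis j s) 0"
    unfolding isCont_def by (intro tendsto_intros)
qed (use assms(2) in simp)

lemma sum_add_axis:
  fixes a :: "complex^'d::finite"
  shows "(\<Sum>i\<in>UNIV. (a + axis j s) $ i * h i) = (\<Sum>i\<in>UNIV. a $ i * h i) + s * h j"
proof -
  have "(\<Sum>i\<in>UNIV. (a + axis j s) $ i * h i) = (\<Sum>i\<in>UNIV. a $ i * h i + (if i = j then s * h j else 0))"
    by (intro sum.cong) (auto simp: axis_def algebra_simps)
  then show ?thesis
    by (simp add: sum.distrib)
qed

lemma iter_pdiff_add_const:
  "iter_pdiff J (\<lambda>a. h a + c) = (\<lambda>a. iter_pdiff J h a + (if J = [] then c else 0))"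
  by (induction J) (simp_all add: pdiff_def deriv_add_const)

lemma Lpow_eq_exp_Llog: "Lpow z \<gamma> = exp (\<gamma> * Llog z)"
  by (cases z) (simp add: Lpow_def Llog_def algebra_simps)

section \<open>Iterated relative derivatives depending on a parameter\<close>

text \<open>If \<open>h' = q\<close>, then \<open>rel_deriv q X\<close> is the derivative of \<open>X\<close> with respect to \<open>h\<close>.\<close>

definition rel_deriv :: "(complex \<Rightarrow> complex) \<Rightarrow> (complex \<Rightarrow> complex) \<Rightarrow> complex \<Rightarrow> complex" where
  "rel_deriv q X = (\<lambda>v. deriv X v / q v)"

lemma rel_deriv_power_Suc_apply:
  "(rel_deriv q ^^ Suc m) X v = deriv ((rel_deriv q ^^ m) X) v / q v"
  by (simp add: rel_deriv_def)

lemma rel_deriv_power_holomorphic: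
  assumes "open W" "q holomorphic_on W" "\<forall>v\<in>W. q v \<noteq> 0" "X holomorphic_on W"
  shows "(rel_deriv q ^^ n) X holomorphic_on W"
  by (induction n) (use assms in \<open>auto simp: rel_deriv_def intro!: holomorphic_intros\<close>)

text \<open>For the parameter-dependent weight \<open>q - s P'\<close>, the functions
  \<open>(rel_deriv (q - s P') ^^ m) (K / (q - s P'))\<close> are quotients whose numerators are
  polynomials in \<open>s\<close>; \<open>lag_coeff q P K m j\<close> is the coefficient of \<open>s ^ j\<close>.\<close>

fun lag_coeff :: "(complex \<Rightarrow> complex) \<Rightarrow> (complex \<Rightarrow> complex) \<Rightarrow> (complex \<Rightarrow> complex) \<Rightarrow>
    nat \<Rightarrow> nat \<Rightarrow> complex \<Rightarrow> complex" where
  "lag_coeff q P K 0 j = (if j = 0 then K else (\<lambda>v. 0))"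
| "lag_coeff q P K (Suc m) j = (\<lambda>v.
      deriv (lag_coeff q P K m j) v * q v
      - (if j = 0 then 0 else deriv (lag_coeff q P K m (j - 1)) v * deriv P v)
      - of_nat (2 * m + 1) * (lag_coeff q P K m j v * deriv q v
          - (if j = 0 then 0 else lag_coeff q P K m (j - 1) v * deriv (deriv P) v)))"

definition lag_numer :: "(complex \<Rightarrow> complex) \<Rightarrow> (complex \<Rightarrow> complex) \<Rightarrow> (complex \<Rightarrow> complex) \<Rightarrow>
    nat \<Rightarrow> complex \<Rightarrow> complex \<Rightarrow> complex" where
  "lag_numer q P K m s v = (\<Sum>j\<le>m. s ^ j * lag_coeff q P K m j v)"

definition lag_numer_deriv :: "(complex \<Rightarrow> complex) \<Rightarrow> (complex \<Rightarrow> complex) \<Rightarrow> (complex \<Rightarrow> complex) \<Rightarrow>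
    nat \<Rightarrow> complex \<Rightarrow> complex \<Rightarrow> complex" where
  "lag_numer_deriv q P K m s v = (\<Sum>j\<le>m. s ^ j * deriv (lag_coeff q P K m j) v)"

lemma lag_coeff_holomorphic:
  assumes "open B" "q holomorphic_on B" "P holomorphic_on B" "K holomorphic_on B"
  shows "lag_coeff q P K m j holomorphic_on B"
proof (induction m arbitrary: j)
  case 0
  then show ?case
    using assms by auto
next
  case (Suc m)
  have "deriv (lag_coeff q P K m j) holomorphic_on B" for j
    using Suc assms(1) by (rule holomorphic_deriv)
  moreover have "deriv P holomorphic_on B" "deriv (deriv P) holomorphic_on B" "deriv q holomorphic_on B"
    using assms by (auto intro!: holomorphic_deriv)
  ultimately show ?case
    using Suc assms by (cases "j = 0") (auto intro!: holomorphic_intros)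
qed

lemma lag_coeff_eq_0: "m < j \<Longrightarrow> lag_coeff q P K m j = (\<lambda>v. 0)"
proof (induction m arbitrary: j)
  case (Suc m)
  then obtain j' where j: "j = Suc j'"
    by (cases j) auto
  with Suc have e: "lag_coeff q P K m (Suc j') = (\<lambda>v. 0)" "lag_coeff q P K m j' = (\<lambda>v. 0)"
    by auto
  show ?case
    using Suc.prems by (simp add: j e fun_eq_iff)
qed auto

lemma lag_numer_0 [simp]: "lag_numer q P K m 0 v = lag_coeff q P K m 0 v"
  unfolding lag_numer_def by (simp add: power_0_left sum.atMost_shift)

lemma sum_powers_shift:
  fixes f :: "nat \<Rightarrow> complex"
  shows "(\<Sum>j\<le>Suc m. s ^ j * (if j = 0 then 0 else f (j - 1))) = s * (\<Sum>j\<le>m. s ^ j * f j)"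
  by (subst sum.atMost_Suc_shift) (simp add: sum_distrib_left mult_ac)

lemma sum_powers_recurrence:
  fixes a b :: "nat \<Rightarrow> complex"
  assumes "a (Suc m) = 0" "b (Suc m) = 0"
  shows "(\<Sum>j\<le>Suc m. s ^ j * (a j * Q - (if j = 0 then 0 else a (j - 1) * P1)
            - M * (b j * Q1 - (if j = 0 then 0 else b (j - 1) * P2))))
       = (\<Sum>j\<le>m. s ^ j * a j) * (Q - s * P1) - M * (\<Sum>j\<le>m. s ^ j * b j) * (Q1 - s * P2)"
proof -
  have "s ^ j * (a j * Q - (if j = 0 then 0 else a (j - 1) * P1)
            - M * (b j * Q1 - (if j = 0 then 0 else b (j - 1) * P2)))
      = s ^ j * a j * Q - s ^ j * (if j = 0 then 0 else a (j - 1)) * P1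
          - M * (s ^ j * b j * Q1 - s ^ j * (if j = 0 then 0 else b (j - 1)) * P2)" for j
    by (cases j) (simp_all add: algebra_simps)
  note termwise = this
  have "(\<Sum>j\<le>Suc m. s ^ j * (a j * Q - (if j = 0 then 0 else a (j - 1) * P1)
            - M * (b j * Q1 - (if j = 0 then 0 else b (j - 1) * P2))))
     = (\<Sum>j\<le>Suc m. s ^ j * a j) * Q - (\<Sum>j\<le>Suc m. s ^ j * (if j = 0 then 0 else a (j - 1))) * P1
       - M * ((\<Sum>j\<le>Suc m. s ^ j * b j) * Q1
         - (\<Sum>j\<le>Suc m. s ^ j * (if j = 0 then 0 else b (j - 1))) * P2)"
    unfolding termwise
    by (simp add: sum_subtractf sum_distrib_left sum_distrib_right right_diff_distrib
        left_diff_distrib del: sum.atMost_Suc)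
  also have "\<dots> = (\<Sum>j\<le>m. s ^ j * a j) * (Q - s * P1) - M * (\<Sum>j\<le>m. s ^ j * b j) * (Q1 - s * P2)"
    unfolding sum_powers_shift using assms by (simp add: algebra_simps)
  finally show ?thesis .
qed

lemma lag_numer_Suc:
  "lag_numer q P K (Suc m) s v
     = lag_numer_deriv q P K m s v * (q v - s * deriv P v)
       - of_nat (2 * m + 1) * lag_numer q P K m s v * (deriv q v - s * deriv (deriv P) v)"
  unfolding lag_numer_def lag_numer_deriv_def lag_coeff.simps
  by (rule sum_powers_recurrence[where a = "\<lambda>j. deriv (lag_coeff q P K m j) v"
        and b = "\<lambda>j. lag_coeff q P K m j v"]) (simp_all add: lag_coeff_eq_0)

lemma lag_numer_has_deriv:
  assumes "open B" "q holomorphic_on B" "P holomorphic_on B" "K holomorphic_on B" "v \<in> B"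
  shows "(lag_numer q P K m s has_field_derivative lag_numer_deriv q P K m s v) (at v)"
  unfolding lag_numer_def[abs_def] lag_numer_deriv_def
  by (auto intro!: derivative_eq_intros holomorphic_derivI[OF lag_coeff_holomorphic[OF assms(1-4)]]
      assms simp: mult.commute)

lemma rel_deriv_power_eq_lag_numer:
  assumes B: "open B" "q holomorphic_on B" "P holomorphic_on B" "K holomorphic_on B"
  shows "v \<in> B \<Longrightarrow> q v - s * deriv P v \<noteq> 0 \<Longrightarrow>
    (rel_deriv (\<lambda>v. q v - s * deriv P v) ^^ m) (\<lambda>v. K v / (q v - s * deriv P v)) v
      = lag_numer q P K m s v / (q v - s * deriv P v) ^ (2 * m + 1)"
proof (induction m arbitrary: v)
  case 0
  then show ?case
    by (simp add: lag_numer_def)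
next
  case (Suc m)
  define Q where "Q = (\<lambda>v. q v - s * deriv P v)"
  have "Q holomorphic_on B"
    unfolding Q_def using B by (auto intro!: holomorphic_intros)
  then have W: "open {v\<in>B. Q v \<noteq> 0}"
    using B(1) by (intro open_nonzero_set holomorphic_on_imp_continuous_on)
  have Qv: "Q v \<noteq> 0"
    using Suc.prems by (simp add: Q_def)
  then have vW: "v \<in> {v\<in>B. Q v \<noteq> 0}"
    using Suc.prems by simp
  have "eventually (\<lambda>v. (rel_deriv Q ^^ m) (\<lambda>v. K v / Q v) v
                         = lag_numer q P K m s v / Q v ^ (2 * m + 1)) (nhds v)"
    using eventually_nhds_in_open[OF W vW]
    by eventually_elim (use Suc.IH in \<open>auto simp: Q_def\<close>)
  then have "deriv ((rel_deriv Q ^^ m) (\<lambda>v. K v / Q v)) v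
      = deriv (\<lambda>v. lag_numer q P K m s v / Q v ^ (2 * m + 1)) v"
    by (rule deriv_cong_ev) simp
  also have "\<dots> = lag_numer_deriv q P K m s v / Q v ^ (2 * m + 1)
      - of_nat (2 * m + 1) * lag_numer q P K m s v * (deriv q v - s * deriv (deriv P) v)
        / Q v ^ (2 * m + 1 + 1)"
    unfolding Q_def using B Suc.prems
    by (intro DERIV_imp_deriv has_field_derivative_divide_power lag_numer_has_deriv)
      (auto intro!: derivative_eq_intros holomorphic_derivI holomorphic_deriv)
  also have "\<dots> / Q v = lag_numer q P K (Suc m) s v / Q v ^ (2 * Suc m + 1)"
  proof -
    have "q v - s * deriv P v = Q v"
      by (simp add: Q_def)
    then show ?thesis
      unfolding lag_numer_Suc using Qv by (simp add: field_simps power2_eq_square)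
  qed
  finally show ?case
    by (simp only: rel_deriv_power_Suc_apply Q_def)
qed

lemma rel_deriv_power_eq_lag_coeff:
  assumes "open B" "q holomorphic_on B" "P holomorphic_on B" "K holomorphic_on B"
    and "v \<in> B" "q v \<noteq> 0"
  shows "(rel_deriv q ^^ m) (\<lambda>v. K v / q v) v = lag_coeff q P K m 0 v / q v ^ (2 * m + 1)"
  using rel_deriv_power_eq_lag_numer[OF assms(1-4), of v 0 m] assms(5,6) by simp

text \<open>\<open>lag_corr q P K m\<close> is the \<open>s\<close>-derivative at \<open>s = 0\<close> of the quotient
  in \<open>rel_deriv_power_eq_lag_numer\<close>.\<close>

definition lag_corr :: "(complex \<Rightarrow> complex) \<Rightarrow> (complex \<Rightarrow> complex) \<Rightarrow> (complex \<Rightarrow> complex) \<Rightarrow>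
    nat \<Rightarrow> complex \<Rightarrow> complex" where
  "lag_corr q P K m v = lag_coeff q P K m 1 v / q v ^ (2 * m + 1)
     + of_nat (2 * m + 1) * lag_coeff q P K m 0 v * deriv P v / q v ^ (2 * m + 2)"

definition lag_corr_deriv :: "(complex \<Rightarrow> complex) \<Rightarrow> (complex \<Rightarrow> complex) \<Rightarrow> (complex \<Rightarrow> complex) \<Rightarrow>
    nat \<Rightarrow> complex \<Rightarrow> complex" where
  "lag_corr_deriv q P K m v =
     deriv (lag_coeff q P K m 1) v / q v ^ (2 * m + 1)
     - of_nat (2 * m + 1) * lag_coeff q P K m 1 v * deriv q v / q v ^ (2 * m + 2)
     + of_nat (2 * m + 1) * (deriv (lag_coeff q P K m 0) v * deriv P v
                             + lag_coeff q P K m 0 v * deriv (deriv P) v) / q v ^ (2 * m + 2)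
     - of_nat (2 * m + 2) * of_nat (2 * m + 1) * lag_coeff q P K m 0 v * deriv P v * deriv q v
         / q v ^ (2 * m + 3)"

lemma lag_corr_has_deriv:
  assumes B: "open B" "q holomorphic_on B" "P holomorphic_on B" "K holomorphic_on B"
    and v: "v \<in> B" "q v \<noteq> 0"
  shows "(lag_corr q P K m has_field_derivative lag_corr_deriv q P K m v) (at v)"
proof -
  define M where "M = 2 * m + 1"
  have coeff: "(lag_coeff q P K m j has_field_derivative deriv (lag_coeff q P K m j) v) (at v)" for j
    using lag_coeff_holomorphic[OF B] B v by (intro holomorphic_derivI) auto
  have dP': "(deriv P has_field_derivative deriv (deriv P) v) (at v)"
    using B v by (intro holomorphic_derivI[of _ B]) (auto intro!: holomorphic_deriv)
  have dq: "(q has_field_derivative deriv q v) (at v)"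
    using B v by (auto intro!: holomorphic_derivI)
  have dN: "((\<lambda>v. of_nat M * lag_coeff q P K m 0 v * deriv P v) has_field_derivative
      of_nat M * (deriv (lag_coeff q P K m 0) v * deriv P v
                  + lag_coeff q P K m 0 v * deriv (deriv P) v)) (at v)"
    by (auto intro!: derivative_eq_intros coeff dP' simp: algebra_simps)
  have "lag_corr q P K m = (\<lambda>v. lag_coeff q P K m 1 v / q v ^ M
      + (of_nat M * lag_coeff q P K m 0 v * deriv P v) / q v ^ (M + 1))"
    by (simp add: lag_corr_def M_def fun_eq_iff)
  moreover have "lag_corr_deriv q P K m v
      = deriv (lag_coeff q P K m 1) v / q v ^ M - of_nat M * lag_coeff q P K m 1 v * deriv q v / q v ^ (M + 1)
        + (of_nat M * (deriv (lag_coeff q P K m 0) v * deriv P v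
                       + lag_coeff q P K m 0 v * deriv (deriv P) v) / q v ^ (M + 1)
           - of_nat (M + 1) * (of_nat M * lag_coeff q P K m 0 v * deriv P v) * deriv q v / q v ^ (M + 1 + 1))"
    by (simp add: lag_corr_deriv_def M_def algebra_simps eval_nat_numeral)
  ultimately show ?thesis
    using DERIV_add[OF has_field_derivative_divide_power[OF coeff dq v(2), of 1 M]
        has_field_derivative_divide_power[OF dN dq v(2), of "M + 1"]] by simp
qed

lemma lag_corr_Suc:
  assumes "q v \<noteq> 0"
  shows "lag_corr q P K (Suc m) v
    = (deriv P v * (lag_coeff q P K (Suc m) 0 v / q v ^ (2 * Suc m + 1)) + lag_corr_deriv q P K m v) / q v"
proof -
  define t where "t = q v ^ (2 * m + 1)"
  have "t \<noteq> 0"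
    using assms by (simp add: t_def)
  moreover have "q v ^ (2 * m + 2) = t * q v" "q v ^ (2 * m + 3) = t * q v ^ 2"
    "q v ^ (2 * Suc m + 1) = t * q v ^ 2" "q v ^ (2 * Suc m + 2) = t * q v ^ 3"
    by (simp_all add: t_def power_add eval_nat_numeral)
  ultimately show ?thesis
    unfolding lag_corr_def lag_corr_deriv_def lag_coeff.simps t_def[symmetric]
    using assms by (simp add: field_simps power2_eq_square power3_eq_cube)
qed

lemma rel_deriv_mult:
  assumes B: "open B" "q holomorphic_on B" "P holomorphic_on B" "K holomorphic_on B"
    and v: "v \<in> B" "q v \<noteq> 0"
  shows "rel_deriv q (\<lambda>v. P v * K v / q v) v = P v * rel_deriv q (\<lambda>v. K v / q v) v + lag_corr q P K 0 v"
proof -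
  have "open {v\<in>B. q v \<noteq> 0}"
    using B by (intro open_nonzero_set holomorphic_on_imp_continuous_on)
  then have "((\<lambda>v. K v / q v) has_field_derivative deriv (\<lambda>v. K v / q v) v) (at v)"
    using B v by (intro holomorphic_derivI[of _ "{v\<in>B. q v \<noteq> 0}"]) (auto intro!: holomorphic_intros)
  moreover have "(P has_field_derivative deriv P v) (at v)"
    using B v by (intro holomorphic_derivI) auto
  ultimately have "((\<lambda>v. P v * K v / q v) has_field_derivative
      deriv P v * (K v / q v) + deriv (\<lambda>v. K v / q v) v * P v) (at v)"
    using DERIV_mult by (simp add: times_divide_eq_right[symmetric] del: times_divide_eq_right)
  then show ?thesis
    using v by (simp add: DERIV_imp_deriv rel_deriv_def lag_corr_def field_simps power2_eq_square)
qed

lemma rel_deriv_power_mult: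
  assumes B: "open B" "q holomorphic_on B" "P holomorphic_on B" "K holomorphic_on B"
  shows "v \<in> B \<Longrightarrow> q v \<noteq> 0 \<Longrightarrow>
    (rel_deriv q ^^ Suc m) (\<lambda>v. P v * K v / q v) v
      = P v * (rel_deriv q ^^ Suc m) (\<lambda>v. K v / q v) v + lag_corr q P K m v"
proof (induction m arbitrary: v)
  case 0
  then show ?case
    using rel_deriv_mult[OF B] by simp
next
  case (Suc m)
  define W where "W = {v\<in>B. q v \<noteq> 0}"
  have W: "open W" and vW: "v \<in> W" and WB: "W \<subseteq> B"
    using B Suc.prems by (auto simp: W_def intro!: open_nonzero_set holomorphic_on_imp_continuous_on)
  define Z where "Z = (rel_deriv q ^^ Suc m) (\<lambda>v. K v / q v)"
  have "Z holomorphic_on W"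
    unfolding Z_def using W holomorphic_on_subset[OF B(2) WB] holomorphic_on_subset[OF B(4) WB]
    by (intro rel_deriv_power_holomorphic) (auto simp: W_def intro!: holomorphic_intros)
  then have "(Z has_field_derivative deriv Z v) (at v)"
    using W vW by (intro holomorphic_derivI) auto
  moreover have "(P has_field_derivative deriv P v) (at v)"
    using B Suc.prems by (intro holomorphic_derivI) auto
  ultimately have "deriv (\<lambda>v. P v * Z v + lag_corr q P K m v) v
      = deriv P v * Z v + deriv Z v * P v + lag_corr_deriv q P K m v"
    using lag_corr_has_deriv[OF B Suc.prems] by (intro DERIV_imp_deriv DERIV_add DERIV_mult)
  moreover have "eventually (\<lambda>v. (rel_deriv q ^^ Suc m) (\<lambda>v. P v * K v / q v) v
                         = P v * Z v + lag_corr q P K m v) (nhds v)"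
    using eventually_nhds_in_open[OF W vW]
    by eventually_elim (use Suc.IH in \<open>auto simp: W_def Z_def\<close>)
  then have "deriv ((rel_deriv q ^^ Suc m) (\<lambda>v. P v * K v / q v)) v
      = deriv (\<lambda>v. P v * Z v + lag_corr q P K m v) v"
    by (rule deriv_cong_ev) simp
  ultimately have lhs: "(rel_deriv q ^^ Suc (Suc m)) (\<lambda>v. P v * K v / q v) v
      = (deriv P v * Z v + deriv Z v * P v + lag_corr_deriv q P K m v) / q v"
    by (simp only: rel_deriv_power_Suc_apply)
  moreover have rhs: "(rel_deriv q ^^ Suc (Suc m)) (\<lambda>v. K v / q v) v = deriv Z v / q v"
    by (simp only: rel_deriv_power_Suc_apply Z_def)
  moreover have "Z v = lag_coeff q P K (Suc m) 0 v / q v ^ (2 * Suc m + 1)"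
    unfolding Z_def using rel_deriv_power_eq_lag_coeff[OF B Suc.prems, of "Suc m"] by simp
  then have corr: "lag_corr q P K (Suc m) v = (deriv P v * Z v + lag_corr_deriv q P K m v) / q v"
    using lag_corr_Suc[where q = q and v = v, OF Suc.prems(2)] by simp
  show ?case
    unfolding lhs rhs corr by (simp add: add_divide_distrib algebra_simps)
qed

lemma sum_derivs_powers_at_0:
  fixes a :: "nat \<Rightarrow> complex"
  shows "(\<Sum>j\<le>m. of_nat j * 0 ^ (j - 1) * a j + 0 ^ j * b j) = (if m = 0 then 0 else a 1) + b 0"
  by (induction m) (auto simp: le_Suc_eq)

lemma lag_numer_along_has_deriv:
  assumes B: "open B" "q holomorphic_on B" "P holomorphic_on B" "K holomorphic_on B"
    and f: "(f has_field_derivative f') (at 0)" "f 0 = v0" "v0 \<in> B"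
  shows "((\<lambda>s. lag_numer q P K m s (f s)) has_field_derivative
           lag_coeff q P K m 1 v0 + deriv (lag_coeff q P K m 0) v0 * f') (at 0)"
proof -
  have coeff: "(lag_coeff q P K m j has_field_derivative deriv (lag_coeff q P K m j) v0) (at v0)" for j
    using lag_coeff_holomorphic[OF B] B f(3) by (intro holomorphic_derivI) auto
  have "((\<lambda>s. s ^ j * lag_coeff q P K m j (f s)) has_field_derivative
      of_nat j * (1 * 0 ^ (j - Suc 0)) * lag_coeff q P K m j (f 0)
        + deriv (lag_coeff q P K m j) (f 0) * f' * 0 ^ j) (at 0)" for j
    by (intro DERIV_mult DERIV_power[OF DERIV_ident] DERIV_chain2[OF coeff[folded f(2)] f(1)])
  then have "((\<lambda>s. s ^ j * lag_coeff q P K m j (f s)) has_field_derivative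
      of_nat j * 0 ^ (j - 1) * lag_coeff q P K m j v0 + 0 ^ j * (deriv (lag_coeff q P K m j) v0 * f'))
      (at 0)" for j
    using f(2) by (simp add: mult_ac)
  then have "((\<lambda>s. lag_numer q P K m s (f s)) has_field_derivative
      (\<Sum>j\<le>m. of_nat j * 0 ^ (j - 1) * lag_coeff q P K m j v0
                + 0 ^ j * (deriv (lag_coeff q P K m j) v0 * f'))) (at 0)"
    unfolding lag_numer_def by (rule DERIV_sum)
  then show ?thesis
    unfolding sum_derivs_powers_at_0 by (cases m) auto
qed

lemma rel_deriv_power_param_eq_lag_numer:
  assumes B: "open B" "q holomorphic_on B" "P holomorphic_on B" "K holomorphic_on B"
    and v0: "v0 \<in> B" "q v0 \<noteq> 0" and f: "isCont f 0" "f 0 = v0"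
  shows "eventually (\<lambda>s. (rel_deriv (\<lambda>v. q v - s * deriv P v) ^^ m) (\<lambda>v. K v / (q v - s * deriv P v)) (f s)
           = lag_numer q P K m s (f s) / (q (f s) - s * deriv P (f s)) ^ (2 * m + 1)) (nhds 0)"
proof -
  have "continuous_on B q" "continuous_on B (deriv P)"
    using B by (auto intro!: holomorphic_on_imp_continuous_on holomorphic_deriv)
  then have "isCont q v0" "isCont (deriv P) v0"
    using B(1) v0(1) by (auto simp: continuous_on_eq_continuous_at)
  then have "isCont (\<lambda>s. q (f s) - s * deriv P (f s)) 0"
    using f by (auto intro!: continuous_intros isCont_o2[OF f(1)])
  then have "eventually (\<lambda>s. q (f s) - s * deriv P (f s) \<in> -{0}) (nhds 0)"
    using v0 f(2) by (intro eventually_nhds_isCont_in_open) (auto simp: open_Compl)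
  moreover have "eventually (\<lambda>s. f s \<in> B) (nhds 0)"
    using B(1) v0 f by (intro eventually_nhds_isCont_in_open) auto
  ultimately show ?thesis
    by eventually_elim (use rel_deriv_power_eq_lag_numer[OF B] in auto)
qed

lemma rel_deriv_power_param_has_deriv:
  assumes B: "open B" "q holomorphic_on B" "P holomorphic_on B" "K holomorphic_on B"
    and v0: "v0 \<in> B" "q v0 \<noteq> 0"
    and f: "(f has_field_derivative P v0 / q v0) (at 0)" "f 0 = v0"
  shows "((\<lambda>s. (rel_deriv (\<lambda>v. q v - s * deriv P v) ^^ m) (\<lambda>v. K v / (q v - s * deriv P v)) (f s))
           has_field_derivative (rel_deriv q ^^ Suc m) (\<lambda>v. P v * K v / q v) v0) (at 0)"
proof -
  define f' where "f' = P v0 / q v0"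
  define M where "M = 2 * m + 1"
  define H where "H = (\<lambda>s. q (f s) - s * deriv P (f s))"
  have dq: "(q has_field_derivative deriv q v0) (at v0)"
    using B v0 by (intro holomorphic_derivI) auto
  have dP: "(deriv P has_field_derivative deriv (deriv P) v0) (at v0)"
    using B v0 by (intro holomorphic_derivI[of _ B]) (auto intro!: holomorphic_deriv)
  have "(H has_field_derivative
      deriv q (f 0) * f' - (1 * deriv P (f 0) + deriv (deriv P) (f 0) * f' * 0)) (at 0)"
    unfolding H_def f'_def
    by (intro DERIV_diff DERIV_chain2[OF dq[folded f(2)] f(1)] DERIV_mult DERIV_ident
        DERIV_chain2[OF dP[folded f(2)] f(1)])
  then have "(H has_field_derivative deriv q v0 * f' - deriv P v0) (at 0)"
    using f(2) by simp
  moreover have "H 0 \<noteq> 0"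
    using f(2) v0(2) by (simp add: H_def)
  ultimately have "((\<lambda>s. lag_numer q P K m s (f s) / H s ^ M) has_field_derivative
      (lag_coeff q P K m 1 v0 + deriv (lag_coeff q P K m 0) v0 * f') / H 0 ^ M
        - of_nat M * lag_numer q P K m 0 (f 0) * (deriv q v0 * f' - deriv P v0) / H 0 ^ (M + 1)) (at 0)"
    by (intro has_field_derivative_divide_power lag_numer_along_has_deriv[OF B f(1)[folded f'_def] f(2) v0(1)])
  then have "((\<lambda>s. lag_numer q P K m s (f s) / H s ^ M) has_field_derivative
      (lag_coeff q P K m 1 v0 + deriv (lag_coeff q P K m 0) v0 * f') / q v0 ^ M
        - of_nat M * lag_coeff q P K m 0 v0 * (deriv q v0 * f' - deriv P v0) / q v0 ^ (M + 1)) (at 0)"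
    using f(2) by (simp add: H_def)
  moreover have "(lag_coeff q P K m 1 v0 + deriv (lag_coeff q P K m 0) v0 * f') / q v0 ^ M
        - of_nat M * lag_coeff q P K m 0 v0 * (deriv q v0 * f' - deriv P v0) / q v0 ^ (M + 1)
      = (rel_deriv q ^^ Suc m) (\<lambda>v. P v * K v / q v) v0"
    unfolding rel_deriv_power_mult[OF B v0] rel_deriv_power_eq_lag_coeff[OF B v0, of "Suc m"]
      lag_corr_def f'_def M_def using v0(2)
    by (simp add: field_simps)
  ultimately show ?thesis
    using rel_deriv_power_param_eq_lag_numer[OF B v0 DERIV_isCont[OF f(1)] f(2), of m]
    by (simp add: DERIV_cong_ev H_def M_def)
qed

section \<open>Lagrange inversion in several variables\<close>

locale lagrange_system =
  fixes V :: "(complex^'d::finite) set" and B :: "complex set"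
    and \<Phi> :: "'d \<Rightarrow> complex \<Rightarrow> complex" and u :: "complex^'d \<Rightarrow> complex"
  assumes open_V: "open V" and open_B: "open B" and \<Phi>_holomorphic: "\<And>j. \<Phi> j holomorphic_on B"
    and u_in_B: "\<And>a. a \<in> V \<Longrightarrow> u a \<in> B"
    and u_fixed_point: "\<And>a. a \<in> V \<Longrightarrow> u a = (\<Sum>i\<in>UNIV. a $ i * \<Phi> i (u a))"
    and jac_nonzero: "\<And>a. a \<in> V \<Longrightarrow> 1 - (\<Sum>i\<in>UNIV. a $ i * deriv (\<Phi> i) (u a)) \<noteq> 0"
    and u_differentiable: "\<And>a j. a \<in> V \<Longrightarrow> (\<lambda>s. u (a + axis j s)) field_differentiable (at 0)"
begin

text \<open>\<open>jac a\<close> is the derivative of \<open>v \<mapsto> v - (\<Sum>i. a\<^sub>i \<Phi>\<^sub>i v)\<close>.\<close>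

definition jac :: "complex^'d \<Rightarrow> complex \<Rightarrow> complex" where
  "jac a = (\<lambda>v. 1 - (\<Sum>i\<in>UNIV. a $ i * deriv (\<Phi> i) v))"

lemma jac_holomorphic: "jac a holomorphic_on B"
  unfolding jac_def using \<Phi>_holomorphic open_B by (auto intro!: holomorphic_intros)

lemma jac_add_axis: "jac (a + axis j s) = (\<lambda>v. jac a v - s * deriv (\<Phi> j) v)"
  using sum_add_axis[of a j s] by (simp add: jac_def fun_eq_iff)

lemma partial_deriv_u:
  assumes a: "a \<in> V"
  shows "((\<lambda>s. u (a + axis j s)) has_field_derivative \<Phi> j (u a) / jac a (u a)) (at 0)"
proof -
  define f where "f = (\<lambda>s. u (a + axis j s))"
  define v where "v = u a"
  have f0: "f 0 = v"
    by (simp add: f_def v_def)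
  obtain D where D: "(f has_field_derivative D) (at 0)"
    using u_differentiable[OF a] unfolding f_def field_differentiable_def by blast
  have "(\<Phi> i has_field_derivative deriv (\<Phi> i) v) (at v)" for i
    using \<Phi>_holomorphic open_B u_in_B[OF a] by (intro holomorphic_derivI) (auto simp: v_def)
  then have "((\<lambda>s. (\<Sum>i\<in>UNIV. a $ i * \<Phi> i (f s)) + s * \<Phi> j (f s)) has_field_derivative
       (\<Sum>i\<in>UNIV. a $ i * (deriv (\<Phi> i) (f 0) * D)) + (1 * \<Phi> j (f 0) + deriv (\<Phi> j) (f 0) * D * 0))
       (at 0)"
    unfolding f0[symmetric]
    by (intro DERIV_add DERIV_sum DERIV_cmult DERIV_mult DERIV_ident DERIV_chain2[OF _ D])
  moreover have "eventually (\<lambda>s. f s = (\<Sum>i\<in>UNIV. a $ i * \<Phi> i (f s)) + s * \<Phi> j (f s)) (nhds 0)"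
    using eventually_add_axis_in_open[OF open_V a, of j]
  proof eventually_elim
    case (elim s)
    show ?case
      using u_fixed_point[OF elim] sum_add_axis[of a j s "\<lambda>i. \<Phi> i (f s)"] by (simp add: f_def)
  qed
  ultimately have "(f has_field_derivative (\<Sum>i\<in>UNIV. a $ i * (deriv (\<Phi> i) v * D)) + \<Phi> j v) (at 0)"
    using f0 by (simp add: DERIV_cong_ev)
  then have "D = (\<Sum>i\<in>UNIV. a $ i * (deriv (\<Phi> i) v * D)) + \<Phi> j v"
    using DERIV_unique[OF D] by blast
  then have "D * jac a v = \<Phi> j v"
    unfolding jac_def by (simp add: algebra_simps sum_distrib_left sum_distrib_right)
  then have "D = \<Phi> j v / jac a v"
    using jac_nonzero[OF a] by (simp add: jac_def v_def field_simps)
  then show ?thesis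
    using D by (simp add: f_def v_def)
qed

lemma iter_pdiff_u:
  "a \<in> V \<Longrightarrow> iter_pdiff (j # J) u a
     = (rel_deriv (jac a) ^^ length J) (\<lambda>v. (\<Prod>i\<leftarrow>j # J. \<Phi> i v) / jac a v) (u a)"
proof (induction J arbitrary: j a)
  case Nil
  then show ?case
    using DERIV_imp_deriv[OF partial_deriv_u[OF Nil, of j]] by (simp add: pdiff_def)
next
  case (Cons j' J)
  define K where "K = (\<lambda>v. \<Prod>i\<leftarrow>j' # J. \<Phi> i v)"
  have "(\<lambda>v. \<Prod>i\<leftarrow>xs. \<Phi> i v) holomorphic_on B" for xs
    by (induction xs) (auto intro!: holomorphic_intros \<Phi>_holomorphic)
  then have "K holomorphic_on B"
    unfolding K_def .
  then have "((\<lambda>s. (rel_deriv (\<lambda>v. jac a v - s * deriv (\<Phi> j) v) ^^ length J)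
                      (\<lambda>v. K v / (jac a v - s * deriv (\<Phi> j) v)) (u (a + axis j s)))
      has_field_derivative (rel_deriv (jac a) ^^ Suc (length J)) (\<lambda>v. \<Phi> j v * K v / jac a v) (u a)) (at 0)"
    using u_in_B jac_nonzero Cons.prems partial_deriv_u[OF Cons.prems]
    by (intro rel_deriv_power_param_has_deriv[OF open_B jac_holomorphic \<Phi>_holomorphic])
      (auto simp: jac_def)
  moreover have "eventually (\<lambda>s. iter_pdiff (j' # J) u (a + axis j s) =
      (rel_deriv (\<lambda>v. jac a v - s * deriv (\<Phi> j) v) ^^ length J)
        (\<lambda>v. K v / (jac a v - s * deriv (\<Phi> j) v)) (u (a + axis j s))) (nhds 0)"
    using eventually_add_axis_in_open[OF open_V Cons.prems, of j]
    by eventually_elim (use Cons.IH in \<open>auto simp: jac_add_axis K_def\<close>)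
  ultimately have "iter_pdiff (j # j' # J) u a
      = (rel_deriv (jac a) ^^ Suc (length J)) (\<lambda>v. \<Phi> j v * K v / jac a v) (u a)"
    by (simp add: pdiff_def DERIV_imp_deriv deriv_cong_ev)
  then show ?case
    by (simp add: K_def)
qed

lemma lagrange_inversion_at_0:
  assumes "0 \<in> V"
  shows "iter_pdiff (j # J) u 0 = (deriv ^^ length J) (\<lambda>v. \<Prod>i\<leftarrow>j # J. \<Phi> i v) (u 0)"
proof -
  have "jac 0 = (\<lambda>v. 1)" "rel_deriv (\<lambda>v. 1) = deriv"
    by (simp_all add: jac_def rel_deriv_def fun_eq_iff)
  then show ?thesis
    using iter_pdiff_u[OF assms, of j J] by simp
qed

end

lemma lagrange_system_near_0:
  fixes u :: "complex^'d::finite \<Rightarrow> complex"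
  assumes U: "open U" "0 \<in> U" and u: "continuous_on U u" "u 0 = 0"
    and B: "open B" "0 \<in> B" and \<Phi>: "\<And>j. \<Phi> j holomorphic_on B"
    and fixed_point: "\<And>a. a \<in> U \<Longrightarrow> u a \<in> B \<Longrightarrow> u a = (\<Sum>i\<in>UNIV. a $ i * \<Phi> i (u a))"
    and differentiable: "\<And>a j. a \<in> U \<Longrightarrow> (\<lambda>s. u (a + axis j s)) field_differentiable (at 0)"
  obtains V where "0 \<in> V" "lagrange_system V B \<Phi> u"
proof -
  define W where "W = U \<inter> u -` B"
  define V where "V = {a\<in>W. 1 - (\<Sum>i\<in>UNIV. a $ i * deriv (\<Phi> i) (u a)) \<noteq> 0}"
  have W: "open W"
    unfolding W_def using u(1) U(1) B(1) by (rule continuous_open_preimage)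
  have "continuous_on W (\<lambda>a. deriv (\<Phi> i) (u a))" for i
  proof (rule continuous_on_compose2[of B "deriv (\<Phi> i)" W u])
    show "continuous_on B (deriv (\<Phi> i))"
      using \<Phi> B(1) by (intro holomorphic_on_imp_continuous_on holomorphic_deriv)
    show "continuous_on W u"
      using u(1) by (rule continuous_on_subset) (auto simp: W_def)
  qed (auto simp: W_def)
  then have "continuous_on W (\<lambda>a. 1 - (\<Sum>i\<in>UNIV. a $ i * deriv (\<Phi> i) (u a)))"
    by (auto intro!: continuous_intros continuous_on_component continuous_on_id)
  then have "open V"
    unfolding V_def using W by (rule open_nonzero_set[rotated])
  moreover have "0 \<in> V"
    using U(2) u(2) B(2) by (simp add: V_def W_def)
  ultimately show ?thesis
    using B(1) \<Phi> fixed_point differentiable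
    by (intro that[of V]) (unfold_locales, auto simp: V_def W_def)
qed

section \<open>Coefficients of powers of power series\<close>

definition compositions :: "nat \<Rightarrow> nat \<Rightarrow> nat list set" where
  "compositions n l = {xs. length xs = n \<and> (\<forall>x\<in>set xs. 0 < x) \<and> sum_list xs = l}"

definition partitions :: "nat \<Rightarrow> nat \<Rightarrow> nat multiset set" where
  "partitions n l = {A. size A = n \<and> 0 \<notin># A \<and> sum_mset A = l}"

definition partitions_upto :: "nat \<Rightarrow> nat multiset set" where
  "partitions_upto r = {A. 0 \<notin># A \<and> sum_mset A \<le> r}"

lemma finite_compositions: "finite (compositions n l)"
proof (rule finite_subset[OF _ finite_lists_length_eq[of "{0..l}" n]])
  show "compositions n l \<subseteq> {xs. set xs \<subseteq> {0..l} \<and> length xs = n}"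
    by (auto simp: compositions_def member_le_sum_list)
qed simp

lemma compositions_mset_eq:
  assumes "xs \<in> compositions n l" "mset ys = mset xs"
  shows "ys \<in> compositions n l"
proof -
  have "length ys = length xs" "set ys = set xs" "sum_list ys = sum_list xs"
    using assms(2) by (auto dest: mset_eq_length mset_eq_setD simp flip: sum_mset_sum_list)
  then show ?thesis
    using assms(1) by (simp add: compositions_def)
qed

lemma sum_compositions_Suc:
  "(\<Sum>ys\<in>compositions (Suc n) l. f ys) = (\<Sum>i\<in>{1..l}. \<Sum>xs\<in>compositions n (l - i). f (i # xs))"
proof -
  have "(\<Sum>i\<in>{1..l}. \<Sum>xs\<in>compositions n (l - i). f (i # xs))
      = (\<Sum>p\<in>Sigma {1..l} (\<lambda>i. compositions n (l - i)). f (fst p # snd p))"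
    by (subst sum.Sigma) (auto simp: finite_compositions split_def)
  also have "\<dots> = (\<Sum>ys\<in>compositions (Suc n) l. f ys)"
  proof (rule sum.reindex_bij_witness[where i = "\<lambda>ys. (hd ys, tl ys)" and j = "\<lambda>p. fst p # snd p"])
    fix ys
    assume ys: "ys \<in> compositions (Suc n) l"
    then obtain y zs where "ys = y # zs"
      by (cases ys) (auto simp: compositions_def)
    with ys show "fst (hd ys, tl ys) # snd (hd ys, tl ys) = ys"
      "(hd ys, tl ys) \<in> Sigma {1..l} (\<lambda>i. compositions n (l - i))"
      by (auto simp: compositions_def)
  qed (auto simp: compositions_def)
  finally show ?thesis
    by simp
qed

lemma fps_power_nth_compositions:
  fixes D :: "'a::comm_semiring_1 fps"
  assumes "D $ 0 = 0"
  shows "(D ^ n) $ l = (\<Sum>xs\<in>compositions n l. \<Prod>x\<leftarrow>xs. D $ x)"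
proof (induction n arbitrary: l)
  case 0
  have "compositions 0 l = (if l = 0 then {[]} else {})"
    by (auto simp: compositions_def)
  then show ?case
    by simp
next
  case (Suc n)
  have "(D ^ Suc n) $ l = (\<Sum>i=0..l. D $ i * (D ^ n) $ (l - i))"
    by (simp add: fps_mult_nth)
  also have "\<dots> = (\<Sum>i\<in>{1..l}. D $ i * (D ^ n) $ (l - i))"
    using assms by (intro sum.mono_neutral_right) (auto simp: not_le less_Suc_eq_0_disj)
  also have "\<dots> = (\<Sum>i\<in>{1..l}. \<Sum>xs\<in>compositions n (l - i). \<Prod>x\<leftarrow>i # xs. D $ x)"
    by (simp add: Suc.IH sum_distrib_left)
  also have "\<dots> = (\<Sum>xs\<in>compositions (Suc n) l. \<Prod>x\<leftarrow>xs. D $ x)"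
    by (rule sum_compositions_Suc[symmetric])
  finally show ?case .
qed

lemma partitions_eq_image_mset: "partitions n l = mset ` compositions n l"
proof
  show "mset ` compositions n l \<subseteq> partitions n l"
    by (auto simp: compositions_def partitions_def sum_mset_sum_list)
  show "partitions n l \<subseteq> mset ` compositions n l"
  proof
    fix A
    assume A: "A \<in> partitions n l"
    obtain xs where xs: "mset xs = A"
      using ex_mset by blast
    then have "xs \<in> compositions n l"
      using A by (auto simp: compositions_def partitions_def simp flip: sum_mset_sum_list intro!: gr0I)
    then show "A \<in> mset ` compositions n l"
      using xs by blast
  qed
qed

lemma finite_partitions: "finite (partitions n l)"
  unfolding partitions_eq_image_mset by (intro finite_imageI finite_compositions)

lemma size_le_sum_mset_pos: "0 \<notin># A \<Longrightarrow> size A \<le> sum_mset (A :: nat multiset)"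
  by (induction A) auto

lemma finite_partitions_upto: "finite (partitions_upto r)"
proof (rule finite_subset)
  show "partitions_upto r \<subseteq> (\<Union>n\<le>r. \<Union>l\<le>r. partitions n l)"
    using size_le_sum_mset_pos by (fastforce simp: partitions_upto_def partitions_def)
qed (simp add: finite_partitions)

lemma card_permutations_of_multiset_of_nat:
  "(of_nat (card (permutations_of_multiset A)) :: 'a::field_char_0)
     = fact (size A) / (\<Prod>x\<in>set_mset A. fact (count A x))"
proof -
  have "(of_nat (card (permutations_of_multiset A)) :: 'a) * of_nat (\<Prod>x\<in>set_mset A. fact (count A x))
      = of_nat (fact (size A))"
    unfolding of_nat_mult[symmetric] card_permutations_of_multiset_aux ..
  moreover have "(\<Prod>x\<in>set_mset A. fact (count A x) :: 'a) \<noteq> 0"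
    by (simp add: prod_zero_iff)
  ultimately show ?thesis
    by (simp add: field_simps)
qed

lemma sum_compositions_eq_sum_partitions:
  fixes d :: "nat \<Rightarrow> 'a::field_char_0"
  shows "(\<Sum>xs\<in>compositions n l. \<Prod>x\<leftarrow>xs. d x)
     = (\<Sum>A\<in>partitions n l. fact (size A) / (\<Prod>x\<in>set_mset A. fact (count A x)) * (\<Prod>x\<in>#A. d x))"
proof -
  have perms: "{xs\<in>compositions n l. mset xs = A} = permutations_of_multiset A"
    if A: "A \<in> partitions n l" for A
  proof -
    obtain xs where "xs \<in> compositions n l" "A = mset xs"
      using A unfolding partitions_eq_image_mset by blast
    then show ?thesis
      using compositions_mset_eq by (auto simp: permutations_of_multiset_def)
  qed
  have "(\<Sum>xs\<in>compositions n l. \<Prod>x\<leftarrow>xs. d x)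
      = (\<Sum>A\<in>partitions n l. \<Sum>xs\<in>{xs\<in>compositions n l. mset xs = A}. \<Prod>x\<leftarrow>xs. d x)"
    by (rule sum.group[symmetric]) (auto simp: finite_compositions finite_partitions partitions_eq_image_mset)
  also have "\<dots> = (\<Sum>A\<in>partitions n l. of_nat (card (permutations_of_multiset A)) * (\<Prod>x\<in>#A. d x))"
  proof (intro sum.cong refl)
    fix A
    assume "A \<in> partitions n l"
    then have "(\<Sum>xs\<in>{xs\<in>compositions n l. mset xs = A}. \<Prod>x\<leftarrow>xs. d x)
        = (\<Sum>xs\<in>permutations_of_multiset A. \<Prod>x\<in>#A. d x)"
      by (intro sum.cong) (auto simp: perms permutations_of_multiset_def simp flip: prod_mset_prod_list)
    then show "(\<Sum>xs\<in>{xs\<in>compositions n l. mset xs = A}. \<Prod>x\<leftarrow>xs. d x)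
        = of_nat (card (permutations_of_multiset A)) * (\<Prod>x\<in>#A. d x)"
      by simp
  qed
  finally show ?thesis
    by (simp add: card_permutations_of_multiset_of_nat)
qed

lemma prod_mset_divide_const:
  fixes f :: "'b \<Rightarrow> 'a::field"
  shows "(\<Prod>x\<in>#A. f x / k) = (\<Prod>x\<in>#A. f x) / k ^ size A"
  by (induction A) (auto simp: field_simps)

lemma fps_inverse_shift_power_nth:
  fixes c :: "nat \<Rightarrow> 'a::field_char_0"
  assumes c1: "c 1 \<noteq> 0"
  shows "(inverse (fps_shift 1 (Abs_fps c)) ^ N) $ l
     = (\<Sum>n\<le>l. \<Sum>A\<in>partitions n l. (- of_nat N gchoose n) * fact n
          / (\<Prod>x\<in>set_mset A. fact (count A x)) * (\<Prod>x\<in>#A. c (Suc x)) / c 1 ^ (N + n))"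
proof -
  define D where "D = Abs_fps (\<lambda>j. if j = 0 then 0 else c (Suc j) / c 1)"
  have D0: "D $ 0 = 0"
    by (simp add: D_def)
  have "fps_shift 1 (Abs_fps c) = fps_const (c 1) * (1 + D)"
    using c1 by (auto simp: fps_eq_iff D_def)
  then have "inverse (fps_shift 1 (Abs_fps c)) ^ N = fps_const (inverse (c 1) ^ N) * inverse ((1 + D) ^ N)"
    by (simp add: fps_inverse_mult power_mult_distrib fps_const_inverse fps_inverse_power)
  also have "(1 + D) ^ N = (1 + fps_X) ^ N oo D"
    using D0 by (simp add: fps_compose_power fps_compose_add_distrib flip: fps_compose_power)
  also have "inverse ((1 + fps_X) ^ N oo D) = inverse ((1 + fps_X :: 'a fps) ^ N) oo D"
    by (rule fps_inverse_compose[OF D0, symmetric]) simp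
  also have "inverse ((1 + fps_X :: 'a fps) ^ N) = fps_binomial (- of_nat N)"
    by (rule fps_binomial_minus_of_nat[symmetric])
  finally have "(inverse (fps_shift 1 (Abs_fps c)) ^ N) $ l
      = inverse (c 1) ^ N * (\<Sum>n\<le>l. (- of_nat N gchoose n) * (D ^ n) $ l)"
    by (simp add: fps_compose_nth atLeast0AtMost)
  moreover have "(D ^ n) $ l = (\<Sum>A\<in>partitions n l. fact n / (\<Prod>x\<in>set_mset A. fact (count A x))
      * (\<Prod>x\<in>#A. c (Suc x)) / c 1 ^ n)" for n
  proof -
    have "(\<Prod>x\<in>#A. D $ x) = (\<Prod>x\<in>#A. c (Suc x)) / c 1 ^ n" if "A \<in> partitions n l" for A
    proof -
      have "(\<Prod>x\<in>#A. D $ x) = (\<Prod>x\<in>#A. c (Suc x) / c 1)"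
        using that by (auto intro!: arg_cong[where f = prod_mset] image_mset_cong gr0I
            simp: D_def partitions_def)
      then show ?thesis
        using that by (simp add: prod_mset_divide_const partitions_def)
    qed
    then show ?thesis
      unfolding fps_power_nth_compositions[OF D0] sum_compositions_eq_sum_partitions
      by (intro sum.cong) (auto simp: partitions_def)
  qed
  ultimately show ?thesis
    by (simp add: sum_distrib_left field_simps power_add)
qed

lemma sum_partitions_regroup:
  "(\<Sum>i\<le>r. \<Sum>n\<le>r - i. \<Sum>A\<in>partitions n (r - i). F i n A)
     = (\<Sum>A\<in>partitions_upto r. F (r - sum_mset A) (size A) A)"
proof -
  have "(\<Sum>i\<le>r. \<Sum>n\<le>r - i. \<Sum>A\<in>partitions n (r - i). F i n A)
      = (\<Sum>p\<in>Sigma {..r} (\<lambda>i. Sigma {..r - i} (\<lambda>n. partitions n (r - i))).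
           F (fst p) (fst (snd p)) (snd (snd p)))"
    by (subst sum.Sigma, simp, simp add: finite_partitions finite_SigmaI, subst sum.Sigma)
      (auto simp: finite_partitions split_def)
  also have "\<dots> = (\<Sum>A\<in>partitions_upto r. F (r - sum_mset A) (size A) A)"
  proof (rule sum.reindex_bij_witness[where i = "\<lambda>A. (r - sum_mset A, size A, A)"
        and j = "\<lambda>p. snd (snd p)"])
    fix A
    assume "A \<in> partitions_upto r"
    with size_le_sum_mset_pos[of A]
    show "(r - sum_mset A, size A, A) \<in> Sigma {..r} (\<lambda>i. Sigma {..r - i} (\<lambda>n. partitions n (r - i)))"
      by (auto simp: partitions_upto_def partitions_def)
  qed (auto simp: partitions_def partitions_upto_def)
  finally show ?thesis .
qed

text \<open>The sum in \<open>Ffun\<close> re-indexed by the partition \<open>A\<close> in which \<open>i\<close> has multiplicity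
  \<open>\<mu>\<^sub>i\<^sub>+\<^sub>1\<close>, with \<open>b\<close> in place of \<open>\<alpha>\<^sup>-\<^sup>1\<close>.\<close>

definition F_partition_sum :: "(nat \<Rightarrow> complex) \<Rightarrow> complex \<Rightarrow> complex \<Rightarrow> nat \<Rightarrow> complex" where
  "F_partition_sum c x b r = (\<Sum>A\<in>partitions_upto r.
     (-1) ^ (r - size A) * (x gchoose (r - sum_mset A)) * fact (r + size A) * b ^ (r - sum_mset A)
       / c 1 ^ (r + 1 + size A) * (\<Prod>j\<in>set_mset A. c (Suc j) ^ count A j / fact (count A j)))"

lemma gbinomial_minus_Suc:
  "(- of_nat (Suc r) gchoose k :: 'a::field_char_0) = (-1) ^ k * fact (r + k) / (fact k * fact r)"
proof -
  have "(- of_nat (Suc r) gchoose k :: 'a) = (-1) ^ k * of_nat ((r + k) choose k)"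
    by (subst gbinomial_negated_upper) (simp add: binomial_gbinomial add_ac)
  then show ?thesis
    by (simp add: binomial_fact)
qed

lemma fps_binomial_mult_inverse_power_nth:
  fixes c :: "nat \<Rightarrow> complex"
  assumes c1: "c 1 \<noteq> 0"
  shows "fact r * (Abs_fps (\<lambda>n. (x gchoose n) * b ^ n) * inverse (fps_shift 1 (Abs_fps c)) ^ Suc r) $ r
       = (-1) ^ r * F_partition_sum c x b r"
proof -
  define H where "H = inverse (fps_shift 1 (Abs_fps c)) ^ Suc r"
  have "(Abs_fps (\<lambda>n. (x gchoose n) * b ^ n) * H) $ r = (\<Sum>i\<le>r. (x gchoose i) * b ^ i * H $ (r - i))"
    by (simp add: fps_mult_nth atLeast0AtMost)
  then have "fact r * (Abs_fps (\<lambda>n. (x gchoose n) * b ^ n) * H) $ r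
      = (\<Sum>i\<le>r. \<Sum>n\<le>r - i. \<Sum>A\<in>partitions n (r - i). fact r * ((x gchoose i) * b ^ i
          * ((- of_nat (Suc r) gchoose n) * fact n / (\<Prod>x\<in>set_mset A. fact (count A x))
          * (\<Prod>x\<in>#A. c (Suc x)) / c 1 ^ (Suc r + n))))"
    unfolding H_def fps_inverse_shift_power_nth[of c, OF c1] by (simp add: sum_distrib_left)
  also have "\<dots> = (\<Sum>A\<in>partitions_upto r. fact r * ((x gchoose (r - sum_mset A)) * b ^ (r - sum_mset A)
          * ((- of_nat (Suc r) gchoose size A) * fact (size A) / (\<Prod>x\<in>set_mset A. fact (count A x))
          * (\<Prod>x\<in>#A. c (Suc x)) / c 1 ^ (Suc r + size A))))"
    by (rule sum_partitions_regroup)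
  also have "\<dots> = (-1) ^ r * F_partition_sum c x b r"
    unfolding F_partition_sum_def sum_distrib_left
  proof (intro sum.cong refl)
    fix A
    assume "A \<in> partitions_upto r"
    then have "size A \<le> r"
      using size_le_sum_mset_pos[of A] by (auto simp: partitions_upto_def)
    then have "(-1::complex) ^ r = (-1) ^ (r - size A) * (-1) ^ size A"
      by (simp flip: power_add)
    then have sign: "(-1::complex) ^ r * (-1) ^ (r - size A) = (-1) ^ size A"
      by (simp add: mult_ac)
    have prod: "(\<Prod>x\<in>#A. c (Suc x)) / (\<Prod>x\<in>set_mset A. fact (count A x))
        = (\<Prod>j\<in>set_mset A. c (Suc j) ^ count A j / fact (count A j))"
      by (simp add: image_prod_mset_multiplicity prod_dividef)
    show "fact r * ((x gchoose (r - sum_mset A)) * b ^ (r - sum_mset A)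
          * ((- of_nat (Suc r) gchoose size A) * fact (size A) / (\<Prod>x\<in>set_mset A. fact (count A x))
          * (\<Prod>x\<in>#A. c (Suc x)) / c 1 ^ (Suc r + size A)))
        = (-1) ^ r * ((-1) ^ (r - size A) * (x gchoose (r - sum_mset A)) * fact (r + size A)
          * b ^ (r - sum_mset A) / c 1 ^ (r + 1 + size A)
          * (\<Prod>j\<in>set_mset A. c (Suc j) ^ count A j / fact (count A j)))"
      unfolding gbinomial_minus_Suc prod[symmetric] using c1 sign by (simp add: field_simps)
  qed
  finally show ?thesis
    by (simp add: H_def)
qed

section \<open>The sum over \<open>C(r)\<close> as a sum over partitions\<close>

text \<open>A sequence \<open>\<mu> \<in> C(r)\<close> corresponds to the partition in which \<open>j \<ge> 1\<close> occurs \<open>\<mu>\<^sub>j\<^sub>+\<^sub>1\<close>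
  times; \<open>\<mu>\<^sub>1\<close> is then determined by \<open>r\<close>.\<close>

definition mset_of_seq :: "(nat \<Rightarrow> nat) \<Rightarrow> nat multiset" where
  "mset_of_seq \<mu> = Abs_multiset (\<lambda>j. if j = 0 then 0 else \<mu> (Suc j))"

definition seq_of_mset :: "nat \<Rightarrow> nat multiset \<Rightarrow> nat \<Rightarrow> nat" where
  "seq_of_mset r A = (\<lambda>i. if i = 0 then 0 else if i = 1 then r - size A else count A (i - 1))"

definition seq_weight :: "(nat \<Rightarrow> nat) \<Rightarrow> nat" where
  "seq_weight \<mu> = (\<Sum>i\<in>supp2 \<mu>. (i - 1) * \<mu> i)"

definition seq_parts :: "(nat \<Rightarrow> nat) \<Rightarrow> nat" where
  "seq_parts \<mu> = (\<Sum>i\<in>supp2 \<mu>. \<mu> i)"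

lemma sum_mset_eq_sum_count: "sum_mset (A :: nat multiset) = (\<Sum>j\<in>set_mset A. j * count A j)"
proof (induction A)
  case (add x A)
  show ?case
  proof (cases "x \<in># A")
    case True
    then have "(\<Sum>j\<in>set_mset (add_mset x A). j * count (add_mset x A) j)
        = (\<Sum>j\<in>set_mset A. j * count A j + (if j = x then x else 0))"
      by (intro sum.cong) (auto simp: insert_absorb)
    with True add show ?thesis
      by (simp add: sum.distrib)
  next
    case False
    then have "(\<Sum>j\<in>set_mset A. j * count (add_mset x A) j) = (\<Sum>j\<in>set_mset A. j * count A j)"
      by (intro sum.cong) auto
    with False add show ?thesis
      by (simp add: not_in_iff)
  qed
qed simp

lemma partitions_upto_props:
  assumes "A \<in> partitions_upto r"
  shows "0 \<notin># A" "sum_mset A \<le> r" "size A \<le> r"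
  using assms size_le_sum_mset_pos[of A] by (auto simp: partitions_upto_def)

lemma finite_supp2:
  assumes "\<mu> \<in> Cseq r"
  shows "finite (supp2 \<mu>)"
  by (rule finite_subset[of _ "{i. \<mu> i \<noteq> 0}"]) (use assms in \<open>auto simp: supp2_def Cseq_def\<close>)

lemma Cseq_first_plus_parts:
  assumes \<mu>: "\<mu> \<in> Cseq r"
  shows "\<mu> 1 + seq_parts \<mu> = r"
proof -
  have "{i. \<mu> i \<noteq> 0} \<subseteq> insert 1 (supp2 \<mu>)"
  proof
    fix i
    assume "i \<in> {i. \<mu> i \<noteq> 0}"
    moreover from this have "i \<noteq> 0"
      using \<mu> by (cases i) (auto simp: Cseq_def)
    ultimately show "i \<in> insert 1 (supp2 \<mu>)"
      by (cases "i = 1") (auto simp: supp2_def)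
  qed
  then have "(\<Sum>i\<in>insert 1 (supp2 \<mu>). \<mu> i) = (\<Sum>i\<in>{i. \<mu> i \<noteq> 0}. \<mu> i)"
    using finite_supp2[OF \<mu>] by (intro sum.mono_neutral_right) auto
  then show ?thesis
    using \<mu> finite_supp2[OF \<mu>] by (simp add: Cseq_def seq_parts_def supp2_def)
qed

lemma count_mset_of_seq:
  assumes \<mu>: "\<mu> \<in> Cseq r"
  shows "count (mset_of_seq \<mu>) = (\<lambda>j. if j = 0 then 0 else \<mu> (Suc j))"
  unfolding mset_of_seq_def
proof (rule count_Abs_multiset)
  have "{j. 0 < (if j = 0 then 0 else \<mu> (Suc j))} \<subseteq> (\<lambda>i. i - 1) ` {i. \<mu> i \<noteq> 0}"
    by (auto intro!: image_eqI[where x = "Suc _"] split: if_splits)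
  then show "finite {j. 0 < (if j = 0 then 0 else \<mu> (Suc j))}"
    by (rule finite_subset) (use \<mu> in \<open>simp add: Cseq_def\<close>)
qed

lemma supp2_eq_image_Suc_mset_of_seq:
  assumes \<mu>: "\<mu> \<in> Cseq r"
  shows "supp2 \<mu> = Suc ` set_mset (mset_of_seq \<mu>)"
proof (intro set_eqI iffI)
  fix i
  assume i: "i \<in> supp2 \<mu>"
  then have "i = Suc (i - 1)" "i - 1 \<in># mset_of_seq \<mu>"
    by (auto simp: supp2_def count_mset_of_seq[OF \<mu>] set_mset_def)
  then show "i \<in> Suc ` set_mset (mset_of_seq \<mu>)"
    by blast
qed (auto simp: supp2_def count_mset_of_seq[OF \<mu>] set_mset_def split: if_splits)

lemma sum_mset_of_seq:
  fixes h :: "nat \<Rightarrow> nat \<Rightarrow> 'a::comm_monoid_add"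
  assumes \<mu>: "\<mu> \<in> Cseq r"
  shows "(\<Sum>j\<in>set_mset (mset_of_seq \<mu>). h j (count (mset_of_seq \<mu>) j)) = (\<Sum>i\<in>supp2 \<mu>. h (i - 1) (\<mu> i))"
proof -
  have nz: "j \<noteq> 0" if "j \<in># mset_of_seq \<mu>" for j
    using that count_mset_of_seq[OF \<mu>] by (auto simp: set_mset_def split: if_splits)
  show ?thesis
    unfolding supp2_eq_image_Suc_mset_of_seq[OF \<mu>]
    by (simp add: sum.reindex count_mset_of_seq[OF \<mu>] nz cong: sum.cong)
qed

lemma size_mset_of_seq: "\<mu> \<in> Cseq r \<Longrightarrow> size (mset_of_seq \<mu>) = seq_parts \<mu>"
  using sum_mset_of_seq[of \<mu> r "\<lambda>j k. k"] by (simp add: size_multiset_overloaded_eq seq_parts_def)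

lemma sum_mset_mset_of_seq: "\<mu> \<in> Cseq r \<Longrightarrow> sum_mset (mset_of_seq \<mu>) = seq_weight \<mu>"
  using sum_mset_of_seq[of \<mu> r "\<lambda>j k. j * k"] by (simp add: sum_mset_eq_sum_count seq_weight_def)

lemma seq_of_mset_at_Suc:
  "A \<in> partitions_upto r \<Longrightarrow> j \<in># A \<Longrightarrow> seq_of_mset r A (Suc j) = count A j"
  using partitions_upto_props(1)[of A r] by (cases j) (auto simp: seq_of_mset_def)

lemma supp2_seq_of_mset: "A \<in> partitions_upto r \<Longrightarrow> supp2 (seq_of_mset r A) = Suc ` set_mset A"
  using partitions_upto_props(1)[of A r]
  by (auto simp: supp2_def seq_of_mset_def image_iff count_eq_zero_iff Suc_le_eq
      intro: exI[where x = "_ - 1"] split: if_splits) (metis Suc_pred gr0I)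

lemma sum_seq_of_mset:
  fixes h :: "nat \<Rightarrow> nat \<Rightarrow> 'a::comm_monoid_add"
  assumes "A \<in> partitions_upto r"
  shows "(\<Sum>i\<in>supp2 (seq_of_mset r A). h i (seq_of_mset r A i)) = (\<Sum>j\<in>set_mset A. h (Suc j) (count A j))"
  using assms by (simp add: supp2_seq_of_mset sum.reindex seq_of_mset_at_Suc)

lemma prod_seq_of_mset:
  fixes h :: "nat \<Rightarrow> nat \<Rightarrow> 'a::comm_monoid_mult"
  assumes "A \<in> partitions_upto r"
  shows "(\<Prod>i\<in>supp2 (seq_of_mset r A). h i (seq_of_mset r A i)) = (\<Prod>j\<in>set_mset A. h (Suc j) (count A j))"
  using assms by (simp add: supp2_seq_of_mset prod.reindex seq_of_mset_at_Suc)

lemma seq_weight_seq_of_mset: "A \<in> partitions_upto r \<Longrightarrow> seq_weight (seq_of_mset r A) = sum_mset A"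
  using sum_seq_of_mset[of A r "\<lambda>i k. (i - 1) * k"] by (simp add: seq_weight_def sum_mset_eq_sum_count)

lemma seq_parts_seq_of_mset: "A \<in> partitions_upto r \<Longrightarrow> seq_parts (seq_of_mset r A) = size A"
  using sum_seq_of_mset[of A r "\<lambda>i k. k"] by (simp add: seq_parts_def size_multiset_overloaded_eq)

lemma seq_of_mset_in_Cseq:
  assumes A: "A \<in> partitions_upto r"
  shows "seq_of_mset r A \<in> Cseq r"
proof -
  define \<mu> where "\<mu> = seq_of_mset r A"
  have sub: "{i. \<mu> i \<noteq> 0} \<subseteq> insert 1 (supp2 \<mu>)"
    by (auto simp: \<mu>_def seq_of_mset_def supp2_def split: if_splits)
  have fin: "finite (insert 1 (supp2 \<mu>))"
    unfolding \<mu>_def supp2_seq_of_mset[OF A] by simp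
  have "(\<Sum>i\<in>{i. \<mu> i \<noteq> 0}. \<mu> i) = (\<Sum>i\<in>insert 1 (supp2 \<mu>). \<mu> i)"
    using sub fin by (intro sum.mono_neutral_left) auto
  also have "\<dots> = \<mu> 1 + seq_parts \<mu>"
    unfolding seq_parts_def using fin by (subst sum.insert) (auto simp: supp2_def)
  also have "\<dots> = r"
    using partitions_upto_props[OF A] seq_parts_seq_of_mset[OF A] by (simp add: \<mu>_def seq_of_mset_def)
  finally show ?thesis
    using finite_subset[OF sub fin] by (simp add: Cseq_def \<mu>_def seq_of_mset_def)
qed

lemma mset_of_seq_of_mset: "A \<in> partitions_upto r \<Longrightarrow> mset_of_seq (seq_of_mset r A) = A"
  using count_mset_of_seq[OF seq_of_mset_in_Cseq] partitions_upto_props(1)[of A r]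
  by (auto simp: multiset_eq_iff seq_of_mset_def count_eq_zero_iff)

lemma seq_of_mset_of_seq:
  assumes \<mu>: "\<mu> \<in> Cseq r"
  shows "seq_of_mset r (mset_of_seq \<mu>) = \<mu>"
proof
  fix i
  show "seq_of_mset r (mset_of_seq \<mu>) i = \<mu> i"
    using \<mu> Cseq_first_plus_parts[OF \<mu>] size_mset_of_seq[OF \<mu>] count_mset_of_seq[OF \<mu>]
    by (cases i) (auto simp: seq_of_mset_def Cseq_def)
qed

definition Cseq_bounded :: "nat \<Rightarrow> (nat \<Rightarrow> nat) set" where
  "Cseq_bounded r = {\<mu>\<in>Cseq r. seq_weight \<mu> \<le> r}"

lemma bij_betw_seq_of_mset: "bij_betw (seq_of_mset r) (partitions_upto r) (Cseq_bounded r)"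
proof (rule bij_betw_byWitness[where f' = mset_of_seq])
  show "seq_of_mset r ` partitions_upto r \<subseteq> Cseq_bounded r"
    using seq_of_mset_in_Cseq seq_weight_seq_of_mset partitions_upto_props
    by (auto simp: Cseq_bounded_def)
  show "mset_of_seq ` Cseq_bounded r \<subseteq> partitions_upto r"
    using count_mset_of_seq sum_mset_mset_of_seq
    by (fastforce simp: Cseq_bounded_def partitions_upto_def count_eq_zero_iff[symmetric])
qed (auto simp: mset_of_seq_of_mset seq_of_mset_of_seq Cseq_bounded_def)

lemma Ffun_1_eq_partition_sum:
  assumes Lpow_minus: "\<And>n::nat. Lpow \<alpha>L (- of_nat n) = b ^ n"
  shows "Ffun \<alpha>L c x r 1 = - Lpow \<alpha>L x * F_partition_sum c x b r"
proof -
  define T where "T \<mu> = (-1) ^ (\<mu> 1) * gbinom x (int r - int (seq_weight \<mu>))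
      * of_nat (fact (r + seq_parts \<mu>)) * Lpow \<alpha>L (- of_int (int r - int (seq_weight \<mu>)))
      / c 1 ^ (r + 1 + seq_parts \<mu>) * (\<Prod>i\<in>supp2 \<mu>. c i ^ \<mu> i / of_nat (fact (\<mu> i)))" for \<mu>
  have "(let s1 = (\<Sum>i\<in>supp2 \<mu>. (i - 1) * \<mu> i); s2 = (\<Sum>i\<in>supp2 \<mu>. \<mu> i);
             k = int r - int s1 - (int 1 - 1)
         in (-1) ^ (\<mu> 1) * gbinom x k * of_nat (fact (r + s2)) * Lpow \<alpha>L (- of_int k)
            / c 1 ^ (r + 1 + s2) * (\<Prod>i\<in>supp2 \<mu>. c i ^ \<mu> i / of_nat (fact (\<mu> i)))) = T \<mu>" for \<mu>
    by (simp only: Let_def T_def seq_weight_def seq_parts_def) simp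
  then have "Ffun \<alpha>L c x r 1 = - Lpow \<alpha>L x * infsum T (Cseq r)"
    by (simp only: Ffun_def) simp
  also have "infsum T (Cseq r) = infsum T (Cseq_bounded r)"
    by (rule infsum_cong_neutral) (auto simp: Cseq_bounded_def T_def gbinom_def)
  also have "\<dots> = sum T (Cseq_bounded r)"
    using bij_betw_finite[OF bij_betw_seq_of_mset] finite_partitions_upto by (simp add: infsum_finite)
  also have "\<dots> = (\<Sum>A\<in>partitions_upto r. T (seq_of_mset r A))"
    by (rule sum.reindex_bij_betw[OF bij_betw_seq_of_mset, symmetric])
  also have "\<dots> = F_partition_sum c x b r"
    unfolding F_partition_sum_def
  proof (rule sum.cong[OF refl])
    fix A
    assume A: "A \<in> partitions_upto r"
    then have k: "int r - int (sum_mset A) = int (r - sum_mset A)"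
      using partitions_upto_props(2) by simp
    show "T (seq_of_mset r A) = (-1) ^ (r - size A) * (x gchoose (r - sum_mset A)) * fact (r + size A)
        * b ^ (r - sum_mset A) / c 1 ^ (r + 1 + size A)
        * (\<Prod>j\<in>set_mset A. c (Suc j) ^ count A j / fact (count A j))"
      unfolding T_def seq_weight_seq_of_mset[OF A] seq_parts_seq_of_mset[OF A] k
        prod_seq_of_mset[OF A, of "\<lambda>i k. c i ^ k / of_nat (fact k)"]
      by (simp add: gbinom_def Lpow_minus seq_of_mset_def)
  qed
  finally show ?thesis .
qed

section \<open>The root near \<open>\<alpha>\<close>\<close>

definition zero_quot :: "(complex \<Rightarrow> complex) \<Rightarrow> complex \<Rightarrow> complex \<Rightarrow> complex" where
  "zero_quot g \<alpha> v = (if v = 0 then deriv g \<alpha> else g (\<alpha> + v) / v)"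

lemma zero_quot_holomorphic:
  assumes "g holomorphic_on UNIV" "g \<alpha> = 0"
  shows "zero_quot g \<alpha> holomorphic_on UNIV"
proof -
  have "(\<lambda>z. if z = \<alpha> then deriv g \<alpha> else (g z - g \<alpha>) / (z - \<alpha>)) holomorphic_on UNIV"
    using assms(1) by (rule pole_lemma) simp
  then have "(\<lambda>v. (\<lambda>z. if z = \<alpha> then deriv g \<alpha> else (g z - g \<alpha>) / (z - \<alpha>)) (\<alpha> + v)) holomorphic_on UNIV"
    by (rule holomorphic_on_compose_gen[unfolded o_def, rotated]) (auto intro!: holomorphic_intros)
  moreover have "(\<lambda>v. (\<lambda>z. if z = \<alpha> then deriv g \<alpha> else (g z - g \<alpha>) / (z - \<alpha>)) (\<alpha> + v))
      = zero_quot g \<alpha>"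
    using assms(2) by (auto simp: zero_quot_def fun_eq_iff)
  ultimately show ?thesis
    by simp
qed

lemma has_fps_expansion_zero_quot:
  assumes "g holomorphic_on UNIV" "g \<alpha> = 0" "deriv g \<alpha> \<noteq> 0"
  shows "zero_quot g \<alpha> has_fps_expansion fps_shift 1 (fps_expansion g \<alpha>)"
proof -
  have E: "(\<lambda>v. g (\<alpha> + v)) has_fps_expansion fps_expansion g \<alpha>"
    using assms(1) by (intro analytic_at_imp_has_fps_expansion holomorphic_on_imp_analytic_at) auto
  have F1: "fps_expansion g \<alpha> $ 1 = deriv g \<alpha>"
    by (simp add: fps_expansion_def)
  then have "fps_expansion g \<alpha> \<noteq> 0"
    using assms(3) by auto
  then have "1 \<le> subdegree (fps_expansion g \<alpha>)"
    using assms(2) by (intro subdegree_geI) (auto simp: fps_expansion_def)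
  then have "(\<lambda>v. if v = 0 then fps_expansion g \<alpha> $ 1 else g (\<alpha> + v) / v ^ 1)
      has_fps_expansion fps_shift 1 (fps_expansion g \<alpha>)"
    by (intro has_fps_expansion_shift[OF E]) simp_all
  moreover have "(\<lambda>v. if v = 0 then fps_expansion g \<alpha> $ 1 else g (\<alpha> + v) / v ^ 1) = zero_quot g \<alpha>"
    using F1 by (simp add: zero_quot_def fun_eq_iff)
  ultimately show ?thesis
    by simp
qed

lemma one_plus_notin_nonpos_Reals: "norm (z::complex) < 1 \<Longrightarrow> 1 + z \<notin> \<real>\<^sub>\<le>\<^sub>0"
  using abs_Re_le_cmod[of z] by (auto simp: complex_nonpos_Reals_iff)

lemma has_fps_expansion_binomial_powr:
  fixes \<alpha> x :: complex
  assumes "\<alpha> \<noteq> 0"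
  shows "(\<lambda>v. (1 + v / \<alpha>) powr x) has_fps_expansion Abs_fps (\<lambda>n. (x gchoose n) * inverse \<alpha> ^ n)"
proof (rule has_fps_expansionI)
  have "eventually (\<lambda>v. v \<in> ball 0 (norm \<alpha>)) (nhds (0::complex))"
    using assms by (intro eventually_nhds_in_open) auto
  then show "eventually (\<lambda>v. (\<lambda>n. Abs_fps (\<lambda>n. (x gchoose n) * inverse \<alpha> ^ n) $ n * v ^ n)
      sums (1 + v / \<alpha>) powr x) (nhds 0)"
  proof eventually_elim
    case (elim v)
    then have "norm (v / \<alpha>) < 1"
      using assms by (simp add: norm_divide field_simps)
    from gen_binomial_complex[OF this, of x] show ?case
      by (simp add: divide_inverse mult_ac power_mult_distrib)
  qed
qed

lemma has_fps_expansion_root_kernel: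
  assumes g: "g holomorphic_on UNIV" "g \<alpha> = 0" "deriv g \<alpha> \<noteq> 0" and \<alpha>: "\<alpha> \<noteq> 0"
  shows "(\<lambda>v. (-1) ^ N * exp (x * (Llog \<alpha>L + ln (1 + v / \<alpha>))) / zero_quot g \<alpha> v ^ N)
    has_fps_expansion fps_const ((-1) ^ N * Lpow \<alpha>L x)
      * (Abs_fps (\<lambda>n. (x gchoose n) * inverse \<alpha> ^ n) * inverse (fps_shift 1 (fps_expansion g \<alpha>)) ^ N)"
proof -
  have E: "(\<lambda>v. (-1) ^ N * Lpow \<alpha>L x * ((1 + v / \<alpha>) powr x * inverse (zero_quot g \<alpha> v) ^ N))
      has_fps_expansion fps_const ((-1) ^ N * Lpow \<alpha>L x)
        * (Abs_fps (\<lambda>n. (x gchoose n) * inverse \<alpha> ^ n) * inverse (fps_shift 1 (fps_expansion g \<alpha>)) ^ N)"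
    using g \<alpha> has_fps_expansion_zero_quot[OF g]
    by (intro has_fps_expansion_cmult_left has_fps_expansion_mult has_fps_expansion_binomial_powr
        has_fps_expansion_power has_fps_expansion_inverse) (auto simp: fps_expansion_def)
  have "eventually (\<lambda>v. v \<in> ball 0 (norm \<alpha>)) (nhds (0::complex))"
    using \<alpha> by (intro eventually_nhds_in_open) auto
  then have ev: "eventually (\<lambda>v. (-1) ^ N * Lpow \<alpha>L x * ((1 + v / \<alpha>) powr x * inverse (zero_quot g \<alpha> v) ^ N)
      = (-1) ^ N * exp (x * (Llog \<alpha>L + ln (1 + v / \<alpha>))) / zero_quot g \<alpha> v ^ N) (nhds 0)"
  proof eventually_elim
    case (elim v)
    then have "1 + v / \<alpha> \<noteq> 0"
      using \<alpha> by (auto simp: add_eq_0_iff norm_divide field_simps)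
    then show ?case
      by (simp add: powr_def Lpow_eq_exp_Llog distrib_left exp_add field_simps)
  qed
  show ?thesis
    using has_fps_expansion_cong[OF ev refl] E by simp
qed

lemma higher_deriv_eq_Ffun:
  fixes g :: "complex \<Rightarrow> complex" and \<alpha> :: complex
  defines "c \<equiv> (\<lambda>k. (deriv ^^ k) g \<alpha> / of_nat (fact k))"
  assumes g: "g holomorphic_on UNIV" "g \<alpha> = 0" "deriv g \<alpha> \<noteq> 0"
    and \<alpha>: "\<alpha> \<noteq> 0" "Lpow \<alpha>L 1 = \<alpha>"
  shows "(deriv ^^ r) (\<lambda>v. (-1) ^ Suc r * exp (x * (Llog \<alpha>L + ln (1 + v / \<alpha>))) / zero_quot g \<alpha> v ^ Suc r) 0
           = Ffun \<alpha>L c x r 1"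
proof -
  have "fps_expansion g \<alpha> = Abs_fps c"
    by (simp add: fps_expansion_def c_def)
  from fps_nth_fps_expansion[OF has_fps_expansion_root_kernel[OF g \<alpha>(1), of "Suc r" x \<alpha>L, unfolded this], of r]
  have "(deriv ^^ r) (\<lambda>v. (-1) ^ Suc r * exp (x * (Llog \<alpha>L + ln (1 + v / \<alpha>))) / zero_quot g \<alpha> v ^ Suc r) 0
      = (-1) ^ Suc r * Lpow \<alpha>L x
        * (fact r * (Abs_fps (\<lambda>n. (x gchoose n) * inverse \<alpha> ^ n) * inverse (fps_shift 1 (Abs_fps c)) ^ Suc r) $ r)"
    unfolding fps_mult_left_const_nth by (simp add: field_simps del: power_Suc)
  also have "\<dots> = (-1) ^ Suc r * Lpow \<alpha>L x * ((-1) ^ r * F_partition_sum c x (inverse \<alpha>) r)"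
    using g(3) by (subst fps_binomial_mult_inverse_power_nth) (simp_all add: c_def)
  also have "\<dots> = - Lpow \<alpha>L x * F_partition_sum c x (inverse \<alpha>) r"
    by (simp add: mult_ac)
  also have "\<dots> = Ffun \<alpha>L c x r 1"
    using \<alpha>(2) by (intro Ffun_1_eq_partition_sum[symmetric])
      (simp add: Lpow_eq_exp_Llog exp_minus exp_of_nat_mult power_inverse)
  finally show ?thesis .
qed

lemma ln_one_plus_exp_diff:
  fixes z w :: complex
  assumes "norm (z - w) < 1"
  shows "w + ln (1 + (exp z - exp w) / exp w) = z"
proof -
  have "\<bar>Im (z - w)\<bar> < pi"
    using abs_Im_le_cmod[of "z - w"] assms pi_gt3 by linarith
  moreover have "1 + (exp z - exp w) / exp w = exp (z - w)"
    by (simp add: exp_diff field_simps)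
  ultimately show ?thesis
    by (simp add: abs_less_iff)
qed

lemma zero_quot_fixed_point:
  assumes "g \<alpha> = 0" "zero_quot g \<alpha> v \<noteq> 0" "g (\<alpha> + v) + (\<Sum>i\<in>UNIV. a i * h i) = 0"
  shows "v = (\<Sum>i\<in>UNIV. a i * (- h i / zero_quot g \<alpha> v))"
proof -
  have "g (\<alpha> + v) = v * zero_quot g \<alpha> v"
    using assms(1) by (simp add: zero_quot_def)
  with assms(2,3) show ?thesis
    by (simp add: sum_negf sum_divide_distrib[symmetric] add_eq_0_iff)
qed

lemma root_lagrange_system:
  fixes \<gamma> :: "complex^'d::finite" and \<phi> :: "complex^'d \<Rightarrow> Lpt"
  assumes g: "g holomorphic_on UNIV" "g \<alpha> = 0" "deriv g \<alpha> \<noteq> 0"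
    and \<alpha>: "\<alpha> \<noteq> 0" "Lpow \<alpha>L 1 = \<alpha>"
    and U: "open U" "0 \<in> U"
    and \<phi>_cont: "continuous_on U (\<lambda>a. Llog (\<phi> a))"
    and \<phi>_hol: "\<forall>a\<in>U. \<forall>i. (\<lambda>t. Llog (\<phi> (a + axis i t))) field_differentiable (at 0)"
    and root: "\<forall>a\<in>U. g (Lpow (\<phi> a) 1) + (\<Sum>i\<in>UNIV. a $ i * Lpow (\<phi> a) (\<gamma> $ i)) = 0"
    and \<phi>0: "\<phi> 0 = \<alpha>L"
  obtains V B where "0 \<in> V"
    "lagrange_system V B (\<lambda>i v. - exp (\<gamma> $ i * (Llog \<alpha>L + ln (1 + v / \<alpha>))) / zero_quot g \<alpha> v)
       (\<lambda>a. Lpow (\<phi> a) 1 - \<alpha>)"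
proof -
  define w0 where "w0 = Llog \<alpha>L"
  define \<psi> where "\<psi> = (\<lambda>a. Llog (\<phi> a))"
  define G where "G = zero_quot g \<alpha>"
  define \<Phi> where "\<Phi> = (\<lambda>i v. - exp (\<gamma> $ i * (w0 + ln (1 + v / \<alpha>))) / G v)"
  define U' where "U' = U \<inter> \<psi> -` ball w0 1"
    \<comment> \<open>on \<open>U'\<close> the principal \<open>ln\<close> recovers \<open>\<psi>\<close>, so \<open>\<Phi>\<close> uses the branch of \<open>L\<close> through \<open>\<alpha>L\<close>\<close>
  define B where "B = ball 0 (norm \<alpha>) \<inter> {v. G v \<noteq> 0}"
  have \<alpha>_exp: "\<alpha> = exp w0" and Lpow_\<phi>: "Lpow (\<phi> a) z = exp (z * \<psi> a)" for a z
    using \<alpha>(2) by (simp_all add: Lpow_eq_exp_Llog w0_def \<psi>_def)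
  have G: "G holomorphic_on UNIV"
    unfolding G_def using g(1,2) by (rule zero_quot_holomorphic)
  have U': "open U'"
    unfolding U'_def using \<phi>_cont U(1) by (intro continuous_open_preimage) (simp_all add: \<psi>_def)
  have B: "open B"
    unfolding B_def using G by (intro open_Int open_Collect_neq holomorphic_on_imp_continuous_on) auto
  have \<Phi>: "\<Phi> i holomorphic_on B" for i
    unfolding \<Phi>_def B_def using G one_plus_notin_nonpos_Reals \<alpha>(1)
    by (auto intro!: holomorphic_intros elim: holomorphic_on_subset simp: norm_divide divide_less_eq)
  have u: "continuous_on U' (\<lambda>a. exp (\<psi> a) - \<alpha>)"
    unfolding U'_def \<psi>_def
    by (intro continuous_intros continuous_on_subset[OF \<phi>_cont]) auto
  have differentiable: "(\<lambda>s. exp (\<psi> (a + axis j s)) - \<alpha>) field_differentiable (at 0)"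
    if "a \<in> U'" for a j
    using field_differentiable_compose[OF \<phi>_hol[rule_format, of a j] field_differentiable_within_exp] that
    by (auto simp: U'_def \<psi>_def o_def intro!: field_differentiable_diff)
  have fixed_point: "exp (\<psi> a) - \<alpha> = (\<Sum>i\<in>UNIV. a $ i * \<Phi> i (exp (\<psi> a) - \<alpha>))"
    if a: "a \<in> U'" "exp (\<psi> a) - \<alpha> \<in> B" for a
  proof -
    define v where "v = exp (\<psi> a) - \<alpha>"
    have "norm (\<psi> a - w0) < 1"
      using a(1) by (simp add: U'_def dist_norm norm_minus_commute)
    then have \<psi>_eq: "\<psi> a = w0 + ln (1 + v / \<alpha>)"
      unfolding v_def \<alpha>_exp by (rule ln_one_plus_exp_diff[symmetric])
    have "g (\<alpha> + v) + (\<Sum>i\<in>UNIV. a $ i * exp (\<gamma> $ i * \<psi> a)) = 0"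
      using root a(1) by (simp add: U'_def v_def Lpow_\<phi>)
    then show ?thesis
      using a(2) g(2) unfolding v_def[symmetric] \<Phi>_def G_def \<psi>_eq[symmetric]
      by (intro zero_quot_fixed_point) (simp_all add: B_def v_def G_def)
  qed
  have "0 \<in> U'" "exp (\<psi> 0) - \<alpha> = 0" "0 \<in> B"
    using U(2) g(3) \<alpha>(1) by (simp_all add: U'_def B_def G_def zero_quot_def \<psi>_def \<phi>0 w0_def \<alpha>_exp)
  then obtain V where "0 \<in> V" "lagrange_system V B \<Phi> (\<lambda>a. exp (\<psi> a) - \<alpha>)"
    using lagrange_system_near_0[OF U' _ u _ B _ \<Phi> fixed_point differentiable] by blast
  then show ?thesis
    by (intro that[of V B]) (simp_all add: Lpow_\<phi> \<Phi>_def G_def w0_def)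
qed

lemma prod_list_neg_exp_divide:
  fixes f :: "'a \<Rightarrow> complex"
  shows "(\<Prod>i\<leftarrow>xs. - exp (f i * L) / q) = (-1) ^ length xs * exp ((\<Sum>i\<leftarrow>xs. f i) * L) / q ^ length xs"
proof (induction xs)
  case (Cons x xs)
  show ?case
    unfolding list.map prod_list.Cons Cons.IH by (simp add: distrib_right exp_add)
qed simp

theorem theorem3p2:
  fixes \<gamma> :: "complex^'d::finite"
    and g :: "complex \<Rightarrow> complex"
    and \<alpha> :: complex
    and \<alpha>L :: Lpt
    and U :: "(complex^'d) set"
    and \<phi> :: "complex^'d \<Rightarrow> Lpt"
    and I :: "'d list"
  defines "c \<equiv> (\<lambda>k. (deriv ^^ k) g \<alpha> / of_nat (fact k))"
  assumes g_hol: "g holomorphic_on UNIV"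
    and zero: "g \<alpha> = 0" and nz: "\<alpha> \<noteq> 0" and c1: "c 1 \<noteq> 0"
    and \<alpha>L: "in_L \<alpha>L" "Lpow \<alpha>L 1 = \<alpha>"
    and U: "open U" "0 \<in> U"
    and \<phi>L: "\<forall>a\<in>U. in_L (\<phi> a)"
    and \<phi>_cont: "continuous_on U (\<lambda>a. Llog (\<phi> a))"
    and \<phi>_hol: "\<forall>a\<in>U. \<forall>i. (\<lambda>t. Llog (\<phi> (a + axis i t))) field_differentiable (at 0)"
    and root: "\<forall>a\<in>U. g (Lpow (\<phi> a) 1) + (\<Sum>i\<in>UNIV. a $ i * Lpow (\<phi> a) (\<gamma> $ i)) = 0"
    and \<phi>0: "\<phi> 0 = \<alpha>L"
    and I: "length I \<ge> 1"
  shows "iter_pdiff I (\<lambda>a. Lpow (\<phi> a) 1) 0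
           = Ffun \<alpha>L c (\<Sum>m\<leftarrow>I. \<gamma> $ m) (length I - 1) 1"
proof -
  obtain j J where IJ: "I = j # J"
    using I by (cases I) auto
  define Lg where "Lg = (\<lambda>v. Llog \<alpha>L + ln (1 + v / \<alpha>))"
  define \<Phi> where "\<Phi> = (\<lambda>i v. - exp (\<gamma> $ i * Lg v) / zero_quot g \<alpha> v)"
  define u where "u = (\<lambda>a. Lpow (\<phi> a) 1 - \<alpha>)"
  have g'\<alpha>: "deriv g \<alpha> \<noteq> 0"
    using c1 by (simp add: c_def)
  obtain V B where "0 \<in> V" "lagrange_system V B \<Phi> u"
    using root_lagrange_system[OF g_hol zero g'\<alpha> nz \<alpha>L(2) U \<phi>_cont \<phi>_hol root \<phi>0]
    unfolding \<Phi>_def Lg_def u_def by blast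
  then have "iter_pdiff I u 0 = (deriv ^^ length J) (\<lambda>v. \<Prod>i\<leftarrow>I. \<Phi> i v) 0"
    using lagrange_system.lagrange_inversion_at_0 \<phi>0 \<alpha>L(2) by (fastforce simp: IJ u_def)
  also have "(\<lambda>v. \<Prod>i\<leftarrow>I. \<Phi> i v)
      = (\<lambda>v. (-1) ^ Suc (length J) * exp ((\<Sum>m\<leftarrow>I. \<gamma> $ m) * Lg v) / zero_quot g \<alpha> v ^ Suc (length J))"
    unfolding \<Phi>_def prod_list_neg_exp_divide[where f = "($) \<gamma>"] by (simp add: IJ)
  also have "(deriv ^^ length J) \<dots> 0 = Ffun \<alpha>L c (\<Sum>m\<leftarrow>I. \<gamma> $ m) (length I - 1) 1"
    unfolding Lg_def c_def using higher_deriv_eq_Ffun[OF g_hol zero g'\<alpha> nz \<alpha>L(2)] by (simp add: IJ)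
  finally show ?thesis
    using iter_pdiff_add_const[of I u \<alpha>] by (simp add: IJ u_def)
qed

end
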